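(* Let $q$ be a prime, $A$ a group of exponent $q$ and order $q^3$, and $B$ a subgroup of order $q$ of $Z(A)$. Suppose $A$ acts by automorphisms on a finite group $G$ of order coprime to $q$ with $G=PH$, where $P$ and $H$ are $A$-invariant subgroups, $P$ is a normal $p$-subgroup of $G$ for a prime $p$, and $H$ is a nilpotent $p'$-subgroup. If $P$ is abelian, then $[P,C_H(B)]$ is contained in $\prod_{a\in A^{\#}}[C_P(a),C_H(a)]$.
   Context: $A^{\#}$ is the set of nontrivial elements of $A$; $C_X(Y)$ denotes the fixed points in $X$ of $Y$; $[X,Y]$ is the subgroup generated by commutators $[x,y]$, $x\in X$, $y\in Y$. *)

theory Defs
  imports "HOL-Computational_Algebra.Primes" "HOL-Algebra.Group_Action" "HOL-Algebra.Generated_Groups"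
begin

definition comm_subgroup :: "('g, 'b) monoid_scheme \<Rightarrow> 'g set \<Rightarrow> 'g set \<Rightarrow> 'g set" where
  "comm_subgroup G S T =
     generate G ((\<lambda>(x, y). m_inv G x \<otimes>\<^bsub>G\<^esub> m_inv G y \<otimes>\<^bsub>G\<^esub> x \<otimes>\<^bsub>G\<^esub> y) ` (S \<times> T))"

primrec lower_central :: "('g, 'b) monoid_scheme \<Rightarrow> 'g set \<Rightarrow> nat \<Rightarrow> 'g set" where
  "lower_central G H 0 = H"
| "lower_central G H (Suc n) = comm_subgroup G (lower_central G H n) H"

definition nilpotent_subgroup :: "('g, 'b) monoid_scheme \<Rightarrow> 'g set \<Rightarrow> bool" where
  "nilpotent_subgroup G H \<longleftrightarrow> subgroup H G \<and> (\<exists>n. lower_central G H n = {\<one>\<^bsub>G\<^esub>})"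

definition group_center :: "('a, 'b) monoid_scheme \<Rightarrow> 'a set" where
  "group_center A = {z \<in> carrier A. \<forall>x \<in> carrier A. z \<otimes>\<^bsub>A\<^esub> x = x \<otimes>\<^bsub>A\<^esub> z}"

definition fixed_points :: "('a \<Rightarrow> 'g \<Rightarrow> 'g) \<Rightarrow> 'g set \<Rightarrow> 'a set \<Rightarrow> 'g set" where
  "fixed_points \<phi> S T = {x \<in> S. \<forall>y \<in> T. \<phi> y x = x}"

end

theory Submission
  imports Defs "HOL-Number_Theory.Residues"
begin

text \<open>Write \<open>K = C\<^sub>H(B)\<close> and \<open>T\<close> for the right-hand side. Since \<open>A/B\<close> has order
  \<open>q\<^sup>2\<close>, there are \<open>a, c \<in> A\<close> whose images generate \<open>A/B\<close>; as \<open>B\<close> acts trivially on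
  \<open>K\<close>, the group \<open>\<langle>a, c\<rangle>\<close> acts on \<open>K\<close> as an elementary abelian group of order \<open>q\<^sup>2\<close>.

  The key fact is that an elementary abelian group \<open>E\<close> of order \<open>q\<^sup>2\<close> acting
  coprimely on an abelian group \<open>V\<close> satisfies \<open>V = \<langle>C\<^sub>V(e) : e \<in> E\<^sup>#\<rangle>\<close>; this
  follows from an explicit identity between the norms of \<open>E\<close> and of its \<open>q + 1\<close>
  subgroups of order \<open>q\<close>. Applied to the layers of the \<open>A\<close>-invariant series
  \<open>K \<inter> \<gamma>\<^sub>i(H)\<close>, whose sections are abelian, and combined with the lifting of fixed
  points through these layers (the first cohomology of a cyclic \<open>q\<close>-group with
  coefficients of order prime to \<open>q\<close> vanishes), it gives
  \<open>K = \<langle>C\<^sub>K(f) : f \<in> A - B\<rangle>\<close>. Applied to \<open>\<langle>f, b\<rangle>\<close>, with \<open>f \<notin> B\<close> and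
  \<open>1 \<noteq> b \<in> B\<close>, acting on the abelian group \<open>P\<close>, it gives \<open>[P, C\<^sub>K(f)] \<subseteq> T\<close>.
  Finally, the \<open>k\<close> with \<open>[P, k] \<subseteq> T\<close> form a subgroup because \<open>P\<close> is normal.\<close>

lemma funpow_hom:
  assumes "f \<in> hom G G"
  shows "f ^^ n \<in> hom G G"
proof (induction n)
  case 0
  then show ?case by (simp add: hom_def)
next
  case (Suc n)
  show ?case by (simp only: funpow.simps(2)) (rule hom_compose[OF Suc.IH assms])
qed

lemma funpow_hom_in_carrier:
  assumes "f \<in> hom G G" "x \<in> carrier G"
  shows "(f ^^ n) x \<in> carrier G"
  using assms by (induction n) (auto simp: hom_def)

lemma funpow_closed_on:
  assumes "\<And>x. x \<in> S \<Longrightarrow> f x \<in> S" "x \<in> S"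
  shows "(f ^^ n) x \<in> S"
  using assms by (induction n) auto

lemma funpow_commute:
  assumes comm: "\<And>x. x \<in> S \<Longrightarrow> f (g x) = g (f x)"
    and f: "\<And>x. x \<in> S \<Longrightarrow> f x \<in> S" and g: "\<And>x. x \<in> S \<Longrightarrow> g x \<in> S" and x: "x \<in> S"
  shows "(f ^^ i) ((g ^^ j) x) = (g ^^ j) ((f ^^ i) x)"
proof -
  have f_gj: "f ((g ^^ j) y) = (g ^^ j) (f y)" if "y \<in> S" for y
    using that by (induction j) (auto simp: comm funpow_closed_on[where f = g, OF g])
  show ?thesis using x
    by (induction i arbitrary: x) (auto simp: f_gj funpow_closed_on[where f = f, OF f] funpow_closed_on[where f = g, OF g])
qed

lemma funpow_comp_funpow:
  assumes comm: "\<And>x. x \<in> S \<Longrightarrow> f (g x) = g (f x)"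
    and f: "\<And>x. x \<in> S \<Longrightarrow> f x \<in> S" and g: "\<And>x. x \<in> S \<Longrightarrow> g x \<in> S" and x: "x \<in> S"
  shows "((f \<circ> g ^^ j) ^^ i) x = (f ^^ i) ((g ^^ (i * j)) x)"
proof (induction i)
  case 0
  then show ?case by simp
next
  case (Suc i)
  have "((f \<circ> g ^^ j) ^^ Suc i) x = f ((g ^^ j) (((f \<circ> g ^^ j) ^^ i) x))"
    by simp
  also have "\<dots> = f ((g ^^ j) ((f ^^ i) ((g ^^ (i * j)) x)))"
    by (simp only: Suc.IH)
  also have "(g ^^ j) ((f ^^ i) ((g ^^ (i * j)) x)) = (f ^^ i) ((g ^^ (j + i * j)) x)"
    using funpow_commute[of S f g, OF comm f g funpow_closed_on[where f = g, OF g x], of i j]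
    by (simp add: funpow_add)
  finally show ?case by (simp add: add.commute)
qed

lemma funpow_mod_period:
  assumes period: "\<And>x. x \<in> S \<Longrightarrow> (f ^^ q) x = x"
    and f: "\<And>x. x \<in> S \<Longrightarrow> f x \<in> S" and x: "x \<in> S"
  shows "(f ^^ n) x = (f ^^ (n mod q)) x"
proof -
  have multiple: "(f ^^ (q * k)) y = y" if "y \<in> S" for k y
    using that by (induction k) (auto simp: funpow_add period funpow_closed_on[where f = f, OF f])
  have "(f ^^ n) x = (f ^^ (q * (n div q))) ((f ^^ (n mod q)) x)"
    by (metis comp_apply funpow_add div_mult_mod_eq mult.commute)
  then show ?thesis using multiple funpow_closed_on[where f = f, OF f x] by simp
qed

lemma mult_mod_prime_bij:
  fixes q i :: nat
  assumes "prime q" "0 < i" "i < q"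
  shows "bij_betw (\<lambda>j. i * j mod q) {..<q} {..<q}"
proof -
  have "coprime i q"
    using assms by (metis coprime_commute dvd_imp_le not_le prime_imp_coprime)
  have inj: "inj_on (\<lambda>j. i * j mod q) {..<q}"
  proof (rule inj_onI)
    fix j k assume "j \<in> {..<q}" "k \<in> {..<q}" "i * j mod q = i * k mod q"
    then show "j = k"
      using cong_mult_lcancel_nat[OF \<open>coprime i q\<close>, of j k] by (simp add: cong_def)
  qed
  moreover have "(\<lambda>j. i * j mod q) ` {..<q} = {..<q}"
    by (rule endo_inj_surj) (use inj assms in \<open>auto simp: prime_gt_0_nat\<close>)
  ultimately show ?thesis by (simp add: bij_betw_def)
qed

lemma fermat_mod:
  fixes q s :: nat
  assumes "prime q" "s < q"
  shows "s ^ q mod q = s"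
proof (cases "s = 0")
  case True
  then show ?thesis using prime_gt_0_nat[OF assms(1)] by (simp add: power_0_left)
next
  case False
  then have "\<not> q dvd s" using assms(2) by (auto dest: dvd_imp_le)
  then have "[s * s ^ (q - 1) = s * 1] (mod q)"
    using fermat_theorem[OF assms(1)] by (blast intro: cong_scalar_left)
  moreover have "s * s ^ (q - 1) = s ^ q"
    using prime_gt_0_nat[OF assms(1)] by (cases q) auto
  ultimately show ?thesis using assms(2) by (simp add: cong_def)
qed

context group
begin

lemma subgroup_nat_pow_closed:
  assumes "subgroup W G" "y \<in> W"
  shows "y [^] (n::nat) \<in> W"
  by (induction n) (use assms in \<open>auto intro: subgroup.m_closed subgroup.one_closed\<close>)

lemma nat_pow_mod_exponent:
  assumes "x \<in> carrier G" "x [^] (n::nat) = \<one>"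
  shows "x [^] (k::nat) = x [^] (k mod n)"
proof -
  have "x [^] k = x [^] (n * (k div n)) \<otimes> x [^] (k mod n)"
    by (metis assms(1) div_mult_mod_eq mult.commute nat_pow_mult)
  also have "x [^] (n * (k div n)) = \<one>"
    using assms by (simp add: nat_pow_pow[symmetric])
  finally show ?thesis using assms by simp
qed

lemma nat_pow_coprime_root:
  fixes n q :: nat
  assumes "coprime n q"
  shows "\<exists>u::nat. \<forall>x \<in> carrier G. x [^] n = \<one> \<longrightarrow> (x [^] q) [^] u = x"
proof -
  obtain u where "[q * u = 1] (mod n)"
    using cong_solve_coprime_nat[of q n] assms by (auto simp: coprime_commute)
  then have "(q * u) mod n = 1 mod n" by (simp add: cong_def)
  then have "x [^] (q * u) = x" if "x \<in> carrier G" "x [^] n = \<one>" for x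
    using nat_pow_mod_exponent[OF that, of "q * u"] nat_pow_mod_exponent[OF that, of 1] that(1) by simp
  then have "(x [^] q) [^] u = x" if "x \<in> carrier G" "x [^] n = \<one>" for x
    using that by (simp add: nat_pow_pow)
  then show ?thesis by blast
qed

lemma mem_subgroup_of_coprime_pow:
  fixes n q :: nat
  assumes W: "subgroup W G" and x: "x \<in> carrier G" "x [^] n = \<one>"
    and "coprime n q" "x [^] q \<in> W"
  shows "x \<in> W"
proof -
  obtain u :: nat where "(x [^] q) [^] u = x" using nat_pow_coprime_root[OF \<open>coprime n q\<close>] x by blast
  moreover have "(x [^] q) [^] u \<in> W" by (rule subgroup_nat_pow_closed[OF W \<open>x [^] q \<in> W\<close>])
  ultimately show ?thesis by simp
qed

end

section \<open>Norms of periodic endomorphisms of abelian groups\<close>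

definition endo_norm :: "('a, 'b) monoid_scheme \<Rightarrow> nat \<Rightarrow> ('a \<Rightarrow> 'a) \<Rightarrow> 'a \<Rightarrow> 'a" where
  "endo_norm G q f v = (\<Otimes>\<^bsub>G\<^esub>t\<in>{..<q}. (f ^^ t) v)"

context comm_group
begin

lemma finprod_swap:
  assumes "finite I" "finite J" "\<And>i j. i \<in> I \<Longrightarrow> j \<in> J \<Longrightarrow> f i j \<in> carrier G"
  shows "(\<Otimes>i\<in>I. \<Otimes>j\<in>J. f i j) = (\<Otimes>j\<in>J. \<Otimes>i\<in>I. f i j)"
  using assms(1,3)
proof (induction I rule: finite_induct)
  case empty
  then show ?case by simp
next
  case (insert a I)
  have "(\<Otimes>i\<in>insert a I. \<Otimes>j\<in>J. f i j) = (\<Otimes>j\<in>J. f a j) \<otimes> (\<Otimes>j\<in>J. \<Otimes>i\<in>I. f i j)"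
    using insert by (simp add: Pi_def)
  also have "\<dots> = (\<Otimes>j\<in>J. f a j \<otimes> (\<Otimes>i\<in>I. f i j))"
    by (rule finprod_multf[symmetric]) (use insert in \<open>auto simp: Pi_def\<close>)
  also have "\<dots> = (\<Otimes>j\<in>J. \<Otimes>i\<in>insert a I. f i j)"
    by (rule finprod_cong') (use insert in \<open>auto simp: Pi_def\<close>)
  finally show ?case .
qed

lemma hom_finprod:
  assumes h: "h \<in> hom G G" and f: "f \<in> I \<rightarrow> carrier G"
  shows "h (finprod G f I) = finprod G (\<lambda>i. h (f i)) I"
proof (cases "finite I")
  case False
  then show ?thesis using h by (simp add: hom_one)
next
  case True
  interpret h: group_hom G G h
    using h by (simp add: group_hom_def group_hom_axioms_def is_group)
  from True f show ?thesis
    by (induction I rule: finite_induct) (auto simp: Pi_def)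
qed

lemma finprod_lessThan_Suc_shift:
  assumes "\<And>i. F i \<in> carrier G"
  shows "(\<Otimes>t\<in>{..<Suc j}. F t) = F 0 \<otimes> (\<Otimes>t\<in>{..<j}. F (Suc t))"
proof -
  have "{..<Suc j} = insert 0 (Suc ` {..<j})" by (auto simp: image_iff less_Suc_eq_0_disj)
  then have "(\<Otimes>t\<in>{..<Suc j}. F t) = F 0 \<otimes> (\<Otimes>t\<in>Suc ` {..<j}. F t)"
    using assms by (simp add: Pi_def)
  also have "(\<Otimes>t\<in>Suc ` {..<j}. F t) = (\<Otimes>t\<in>{..<j}. F (Suc t))"
    by (rule finprod_reindex) (use assms in auto)
  finally show ?thesis .
qed

lemma finprod_cyclic_shift:
  assumes "\<And>i. F i \<in> carrier G" "F q = F 0"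
  shows "(\<Otimes>i\<in>{..<q}. F (Suc i)) = (\<Otimes>i\<in>{..<q}. F i)"
proof -
  have "(\<Otimes>i\<in>{..<Suc q}. F i) = F 0 \<otimes> (\<Otimes>i\<in>{..<q}. F (Suc i))"
    by (rule finprod_lessThan_Suc_shift[OF assms(1)])
  moreover have "(\<Otimes>i\<in>{..<Suc q}. F i) = F 0 \<otimes> (\<Otimes>i\<in>{..<q}. F i)"
    using assms by (simp add: lessThan_Suc m_comm Pi_def)
  ultimately show ?thesis using assms(1) by (simp add: Pi_def)
qed

lemma finprod_subgroup_closed:
  assumes "subgroup W G" "f \<in> I \<rightarrow> W"
  shows "finprod G f I \<in> W"
proof (cases "finite I")
  case False
  then show ?thesis using assms by (simp add: subgroup.one_closed)
next
  case True
  have "W \<subseteq> carrier G" using assms(1) by (rule subgroup.subset)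
  from True assms(2) show ?thesis
  proof (induction I rule: finite_induct)
    case empty
    then show ?case using assms(1) by (simp add: subgroup.one_closed)
  next
    case (insert a I)
    then have "finprod G f (insert a I) = f a \<otimes> finprod G f I"
      using \<open>W \<subseteq> carrier G\<close> by (intro finprod_insert) auto
    then show ?case using insert assms(1) by (auto intro: subgroup.m_closed)
  qed
qed

lemma finprod_lessThan_split_first:
  assumes "0 < n" "\<And>i. h i \<in> carrier G"
  shows "(\<Otimes>i\<in>{..<n}. h i) = h 0 \<otimes> (\<Otimes>i\<in>{Suc 0..<n}. h i)"
proof -
  have "{..<n} = insert 0 {Suc 0..<n}" using assms(1) by auto
  then show ?thesis using assms(2) by (simp add: Pi_def)
qed

lemma finprod_mult_mod_prime:
  fixes q i :: nat
  assumes q: "prime q" and i: "0 < i" "i < q"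
    and F: "\<And>t. F t \<in> carrier G" and F_mod: "\<And>t. F t = F (t mod q)"
  shows "(\<Otimes>j\<in>{..<q}. F (i * j)) = (\<Otimes>t\<in>{..<q}. F t)"
proof -
  have "(\<Otimes>j\<in>{..<q}. F (i * j)) = (\<Otimes>j\<in>{..<q}. F (i * j mod q))"
    by (rule finprod_cong') (auto simp: F F_mod[symmetric])
  also have "\<dots> = (\<Otimes>t\<in>(\<lambda>j. i * j mod q) ` {..<q}. F t)"
    using mult_mod_prime_bij[OF q i] F by (subst finprod_reindex) (auto simp: bij_betw_def comp_def)
  also have "\<dots> = (\<Otimes>t\<in>{..<q}. F t)"
    using mult_mod_prime_bij[OF q i] by (simp add: bij_betw_def)
  finally show ?thesis .
qed

lemma endo_norm_closed:
  assumes "f \<in> hom G G" "v \<in> carrier G"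
  shows "endo_norm G q f v \<in> carrier G"
  unfolding endo_norm_def using assms by (simp add: Pi_def funpow_hom_in_carrier)

lemma endo_norm_fixed:
  assumes f: "f \<in> hom G G" and period: "\<And>x. x \<in> carrier G \<Longrightarrow> (f ^^ q) x = x"
    and v: "v \<in> carrier G"
  shows "f (endo_norm G q f v) = endo_norm G q f v"
proof -
  have "f (endo_norm G q f v) = (\<Otimes>t\<in>{..<q}. (f ^^ Suc t) v)"
    unfolding endo_norm_def using f v by (simp add: hom_finprod Pi_def funpow_hom_in_carrier)
  also have "\<dots> = endo_norm G q f v"
    unfolding endo_norm_def
    by (rule finprod_cyclic_shift[where F = "\<lambda>t. (f ^^ t) v"]) (use f v period in \<open>auto simp: funpow_hom_in_carrier\<close>)
  finally show ?thesis .
qed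

text \<open>Hilbert's Theorem 90 in the coprime case: the product \<open>S\<close> of the partial norms
  \<open>X j\<close> of \<open>m\<close> satisfies \<open>S = m\<^sup>q f(S)\<close>, so a \<open>q\<close>-th root of \<open>S\<close> is a solution.\<close>

lemma endo_norm_one_imp_coboundary:
  assumes f: "f \<in> hom G G"
    and exponent: "\<And>x. x \<in> carrier G \<Longrightarrow> x [^] n = \<one>" and cop: "coprime n q"
    and m: "m \<in> carrier G" and norm: "endo_norm G q f m = \<one>"
  shows "\<exists>z\<in>carrier G. m \<otimes> f z = z"
proof -
  interpret f: group_hom G G f
    using f by (simp add: group_hom_def group_hom_axioms_def is_group)
  have Fc: "(f ^^ t) m \<in> carrier G" for t using f m by (simp add: funpow_hom_in_carrier)
  define X where "X j = (\<Otimes>t\<in>{..<j}. (f ^^ t) m)" for j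
  have Xc: "X j \<in> carrier G" for j unfolding X_def by (simp add: Fc Pi_def)
  have X_Suc: "X (Suc j) = X j \<otimes> (f ^^ j) m" for j
    unfolding X_def lessThan_Suc using Fc by (simp add: Pi_def m_comm)
  have X_Suc': "X (Suc j) = m \<otimes> f (X j)" for j
  proof -
    have "X (Suc j) = m \<otimes> (\<Otimes>t\<in>{..<j}. f ((f ^^ t) m))"
      unfolding X_def by (subst finprod_lessThan_Suc_shift) (simp_all add: Fc)
    also have "(\<Otimes>t\<in>{..<j}. f ((f ^^ t) m)) = f (X j)"
      unfolding X_def by (rule hom_finprod[OF f, symmetric]) (simp add: Fc)
    finally show ?thesis .
  qed
  define S where "S = (\<Otimes>j\<in>{..<q}. X j)"
  have Sc: "S \<in> carrier G" unfolding S_def by (simp add: Xc Pi_def)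
  have "(\<Otimes>j\<in>{..<q}. X (Suc j)) = S \<otimes> endo_norm G q f m"
    unfolding S_def endo_norm_def X_Suc by (simp add: Xc Fc Pi_def)
  moreover have "(\<Otimes>j\<in>{..<q}. X (Suc j)) = m [^] q \<otimes> f S"
    unfolding S_def X_Suc'
    by (simp add: Xc m Pi_def finprod_const hom_finprod[OF f, symmetric])
  ultimately have S_eq: "S = m [^] q \<otimes> f S" using norm Sc by simp
  obtain u :: nat where m_root: "(m [^] q) [^] u = m" using nat_pow_coprime_root[OF cop] m exponent by blast
  have "S [^] u = (m [^] q) [^] u \<otimes> (f S) [^] u"
    using S_eq m Sc by (metis pow_mult_distrib f.hom_closed m_comm nat_pow_closed)
  moreover have "f (S [^] u) = (f S) [^] u" using Sc by (simp add: f.hom_nat_pow)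
  ultimately have "S [^] u = m \<otimes> f (S [^] u)" using m_root by simp
  then show ?thesis using Sc by (metis nat_pow_closed)
qed

lemma endo_norm_comp_funpow:
  assumes \<alpha>: "\<alpha> \<in> hom G G" and \<gamma>: "\<gamma> \<in> hom G G"
    and comm: "\<And>x. x \<in> carrier G \<Longrightarrow> \<alpha> (\<gamma> x) = \<gamma> (\<alpha> x)" and v: "v \<in> carrier G"
  shows "endo_norm G q (\<alpha> \<circ> \<gamma> ^^ j) v = (\<Otimes>i\<in>{..<q}. (\<alpha> ^^ i) ((\<gamma> ^^ (i * j)) v))"
  unfolding endo_norm_def
proof (rule finprod_cong')
  show "((\<alpha> \<circ> \<gamma> ^^ j) ^^ i) v = (\<alpha> ^^ i) ((\<gamma> ^^ (i * j)) v)" for i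
    by (rule funpow_comp_funpow[where S = "carrier G"]) (use assms in \<open>auto simp: hom_in_carrier\<close>)
qed (use assms in \<open>auto simp: funpow_hom_in_carrier\<close>)

text \<open>Both sides are products of the terms \<open>\<alpha>\<^sup>i \<gamma>\<^sup>t v\<close>: for \<open>i \<noteq> 0\<close> each occurs once
  among the norms of the \<open>\<langle>\<alpha> \<gamma>\<^sup>j\<rangle>\<close>, because \<open>j \<mapsto> i j\<close> permutes the residues
  mod \<open>q\<close>, while the terms with \<open>i = 0\<close> give \<open>v\<^sup>q\<close> and the norm of \<open>\<langle>\<gamma>\<rangle>\<close>.\<close>

lemma endo_norm_identity:
  assumes q: "prime q"
    and \<alpha>: "\<alpha> \<in> hom G G" and \<gamma>: "\<gamma> \<in> hom G G"
    and comm: "\<And>x. x \<in> carrier G \<Longrightarrow> \<alpha> (\<gamma> x) = \<gamma> (\<alpha> x)"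
    and \<gamma>_period: "\<And>x. x \<in> carrier G \<Longrightarrow> (\<gamma> ^^ q) x = x"
    and v: "v \<in> carrier G"
  shows "v [^] q \<otimes> (\<Otimes>i\<in>{..<q}. (\<alpha> ^^ i) (endo_norm G q \<gamma> v))
       = (\<Otimes>j\<in>{..<q}. endo_norm G q (\<alpha> \<circ> \<gamma> ^^ j) v) \<otimes> endo_norm G q \<gamma> v"
proof -
  define F where "F i t = (\<alpha> ^^ i) ((\<gamma> ^^ t) v)" for i t
  have Fc: "F i t \<in> carrier G" for i t
    unfolding F_def using \<alpha> \<gamma> v by (simp add: funpow_hom_in_carrier)
  have F_mod: "F i t = F i (t mod q)" for i t
    unfolding F_def using funpow_mod_period[where S = "carrier G" and f = \<gamma> and q = q and x = v and n = t] \<gamma>_period \<gamma> v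
    by (simp add: hom_in_carrier)
  have q0: "0 < q" using q prime_gt_0_nat by blast
  note peel = finprod_lessThan_split_first[OF q0]
  have row: "(\<Otimes>j\<in>{..<q}. F i (i * j)) = (\<Otimes>t\<in>{..<q}. F i t)" if "0 < i" "i < q" for i
    using finprod_mult_mod_prime[OF q that] Fc F_mod by blast
  define R where "R = (\<Otimes>i\<in>{Suc 0..<q}. \<Otimes>t\<in>{..<q}. F i t)"
  have Rc: "R \<in> carrier G" unfolding R_def by (simp add: Fc Pi_def)
  have "(\<Otimes>j\<in>{..<q}. endo_norm G q (\<alpha> \<circ> \<gamma> ^^ j) v) = (\<Otimes>j\<in>{..<q}. \<Otimes>i\<in>{..<q}. F i (i * j))"
    by (simp add: endo_norm_comp_funpow[OF \<alpha> \<gamma> comm v] F_def)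
  also have "\<dots> = (\<Otimes>i\<in>{..<q}. \<Otimes>j\<in>{..<q}. F i (i * j))"
    by (rule finprod_swap) (simp_all add: Fc)
  also have "\<dots> = (\<Otimes>j\<in>{..<q}. F 0 (0 * j)) \<otimes> (\<Otimes>i\<in>{Suc 0..<q}. \<Otimes>j\<in>{..<q}. F i (i * j))"
    by (rule peel) (simp add: Fc Pi_def)
  also have "\<dots> = v [^] q \<otimes> R"
  proof -
    have "F 0 (0 * j) = v" for j by (simp add: F_def)
    then show ?thesis
      unfolding R_def using v by (auto simp: Fc Pi_def finprod_const intro!: finprod_cong' row)
  qed
  finally have rows: "(\<Otimes>j\<in>{..<q}. endo_norm G q (\<alpha> \<circ> \<gamma> ^^ j) v) = v [^] q \<otimes> R" .
  have "(\<Otimes>i\<in>{..<q}. (\<alpha> ^^ i) (endo_norm G q \<gamma> v)) = (\<Otimes>i\<in>{..<q}. \<Otimes>t\<in>{..<q}. F i t)"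
    unfolding endo_norm_def F_def using \<alpha> \<gamma> v
    by (intro finprod_cong') (auto simp: hom_finprod[OF funpow_hom[OF \<alpha>]] funpow_hom_in_carrier Pi_def)
  also have "\<dots> = (\<Otimes>t\<in>{..<q}. F 0 t) \<otimes> R"
    unfolding R_def by (rule peel) (simp add: Fc Pi_def)
  also have "(\<Otimes>t\<in>{..<q}. F 0 t) = endo_norm G q \<gamma> v"
    by (simp add: F_def endo_norm_def)
  finally have cols: "(\<Otimes>i\<in>{..<q}. (\<alpha> ^^ i) (endo_norm G q \<gamma> v)) = endo_norm G q \<gamma> v \<otimes> R" .
  show ?thesis
    unfolding rows cols using Rc v endo_norm_closed[OF \<gamma> v] by (simp add: m_ac)
qed

text \<open>\<open>V = \<langle>C\<^sub>V(e) : e \<in> E\<^sup>#\<rangle>\<close> for \<open>E = \<langle>\<alpha>, \<gamma>\<rangle>\<close> of type \<open>(q, q)\<close> acting coprimely: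
  by the norm identity \<open>v\<^sup>q\<close> is a product of such fixed points.\<close>

lemma mem_subgroup_containing_fixed_points:
  assumes q: "prime q"
    and \<alpha>: "\<alpha> \<in> hom G G" and \<gamma>: "\<gamma> \<in> hom G G"
    and comm: "\<And>x. x \<in> carrier G \<Longrightarrow> \<alpha> (\<gamma> x) = \<gamma> (\<alpha> x)"
    and \<alpha>_period: "\<And>x. x \<in> carrier G \<Longrightarrow> (\<alpha> ^^ q) x = x"
    and \<gamma>_period: "\<And>x. x \<in> carrier G \<Longrightarrow> (\<gamma> ^^ q) x = x"
    and W: "subgroup W G"
    and exponent: "\<And>x. x \<in> carrier G \<Longrightarrow> x [^] n = \<one>" and cop: "coprime n q"
    and fixed_\<alpha>\<gamma>: "\<And>j w. j < q \<Longrightarrow> w \<in> carrier G \<Longrightarrow> \<alpha> ((\<gamma> ^^ j) w) = w \<Longrightarrow> w \<in> W"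
    and fixed_\<gamma>: "\<And>w. w \<in> carrier G \<Longrightarrow> \<gamma> w = w \<Longrightarrow> w \<in> W"
    and v: "v \<in> carrier G"
  shows "v \<in> W"
proof -
  have \<alpha>\<gamma>: "\<alpha> \<circ> \<gamma> ^^ j \<in> hom G G" for j
    by (rule Group.hom_compose[OF funpow_hom[OF \<gamma>] \<alpha>])
  have \<alpha>\<gamma>_period: "((\<alpha> \<circ> \<gamma> ^^ j) ^^ q) x = x" if "x \<in> carrier G" for j x
    using funpow_comp_funpow[where S = "carrier G" and f = \<alpha> and g = \<gamma> and x = x and j = j and i = q] that comm \<alpha> \<gamma> \<alpha>_period \<gamma>_period
      funpow_mod_period[where S = "carrier G" and f = \<gamma> and q = q and x = x and n = "q * j"]
    by (simp add: hom_in_carrier funpow_hom_in_carrier)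
  have norms_\<alpha>\<gamma>: "(\<Otimes>j\<in>{..<q}. endo_norm G q (\<alpha> \<circ> \<gamma> ^^ j) v) \<in> W"
    using endo_norm_fixed[OF \<alpha>\<gamma> \<alpha>\<gamma>_period v] endo_norm_closed[OF \<alpha>\<gamma> v]
    by (intro finprod_subgroup_closed[OF W]) (auto intro: fixed_\<alpha>\<gamma>)
  have N\<gamma>: "endo_norm G q \<gamma> v \<in> carrier G" "\<gamma> (endo_norm G q \<gamma> v) = endo_norm G q \<gamma> v"
    by (rule endo_norm_closed[OF \<gamma> v], rule endo_norm_fixed[OF \<gamma> \<gamma>_period v])
  define Tot where "Tot = (\<Otimes>i\<in>{..<q}. (\<alpha> ^^ i) (endo_norm G q \<gamma> v))"
  have Tot_c: "Tot \<in> carrier G"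
    unfolding Tot_def using N\<gamma> \<alpha> by (simp add: funpow_hom_in_carrier Pi_def)
  have "\<gamma> Tot = (\<Otimes>i\<in>{..<q}. (\<alpha> ^^ i) (\<gamma> (endo_norm G q \<gamma> v)))"
    unfolding Tot_def using N\<gamma> \<alpha> \<gamma> comm
      funpow_commute[of "carrier G" \<alpha> \<gamma> "endo_norm G q \<gamma> v" _ 1]
    by (auto simp: hom_finprod Pi_def funpow_hom_in_carrier hom_in_carrier intro!: finprod_cong')
  then have Tot_W: "Tot \<in> W" using N\<gamma> Tot_c by (intro fixed_\<gamma>) (simp_all add: Tot_def)
  have "v [^] q \<otimes> Tot = (\<Otimes>j\<in>{..<q}. endo_norm G q (\<alpha> \<circ> \<gamma> ^^ j) v) \<otimes> endo_norm G q \<gamma> v"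
    unfolding Tot_def by (rule endo_norm_identity[OF q \<alpha> \<gamma> comm \<gamma>_period v])
  then have "v [^] q \<otimes> Tot \<in> W"
    using norms_\<alpha>\<gamma> N\<gamma> by (simp add: subgroup.m_closed[OF W] fixed_\<gamma>)
  then have "v [^] q \<otimes> Tot \<otimes> inv Tot \<in> W"
    using Tot_W W by (blast intro: subgroup.m_closed subgroup.m_inv_closed)
  then have "v [^] q \<in> W" using v Tot_c by (simp add: m_assoc)
  then show ?thesis by (rule mem_subgroup_of_coprime_pow[OF W v exponent[OF v] cop])
qed

end

context group
begin

lemma mult_inv_cancel_left [simp]: "g \<in> carrier G \<Longrightarrow> y \<in> carrier G \<Longrightarrow> g \<otimes> (inv g \<otimes> y) = y"
  by (simp add: m_assoc[symmetric])

lemma inv_mult_cancel_left [simp]: "g \<in> carrier G \<Longrightarrow> y \<in> carrier G \<Longrightarrow> inv g \<otimes> (g \<otimes> y) = y"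
  by (simp add: m_assoc[symmetric])

lemma rcos_eq_iff_mult_inv:
  assumes "subgroup N G" "x \<in> carrier G" "y \<in> carrier G"
  shows "N #> x = N #> y \<longleftrightarrow> x \<otimes> inv y \<in> N"
  using subgroup.rcos_module[OF assms(1) is_group assms(3,2)] repr_independence[OF _ assms(3,1)]
    rcos_self[OF assms(2,1)] by blast

lemma inv_mult_funpow_Suc:
  assumes f: "f \<in> hom G G" and w: "w \<in> carrier G"
  shows "inv w \<otimes> (f ^^ Suc k) w = (inv w \<otimes> f w) \<otimes> f (inv w \<otimes> (f ^^ k) w)"
proof -
  interpret f: group_hom G G f using f by (simp add: group_hom_def group_hom_axioms_def is_group)
  show ?thesis using w funpow_hom_in_carrier[OF f w, of k] by (simp add: m_assoc)
qed

lemma conj_nat_pow: "c \<in> carrier G \<Longrightarrow> a \<in> carrier G \<Longrightarrow> (c \<otimes> a \<otimes> inv c) [^] (n::nat) = c \<otimes> a [^] n \<otimes> inv c"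
proof (induction n)
  case 0 then show ?case by simp
next
  case (Suc n)
  have "(c \<otimes> a \<otimes> inv c) [^] Suc n = (c \<otimes> a [^] n \<otimes> inv c) \<otimes> (c \<otimes> a \<otimes> inv c)" using Suc by simp
  also have "... = c \<otimes> (a [^] n \<otimes> (inv c \<otimes> (c \<otimes> (a \<otimes> inv c))))" using Suc by (simp add: m_assoc)
  also have "inv c \<otimes> (c \<otimes> (a \<otimes> inv c)) = a \<otimes> inv c" using Suc by (simp add: m_assoc[symmetric])
  finally show ?case using Suc by (simp add: m_assoc)
qed

end

section \<open>Groups of order \<open>q\<^sup>3\<close> and exponent \<open>q\<close>\<close>

locale cube_group = group A for A :: "('a, 'c) monoid_scheme" (structure) +
  fixes q :: nat and B :: "'a set"
  assumes prime_q: "prime q" and order_A: "order A = q ^ 3"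
    and exponent_q: "\<forall>a \<in> carrier A. a [^] q = \<one>"
    and subgroup_B: "subgroup B A" and B_central_subset: "B \<subseteq> group_center A" and card_B: "card B = q"
begin

lemma q_ge_2: "2 \<le> q" using prime_q prime_ge_2_nat by blast
lemma q_pos: "0 < q" using q_ge_2 by simp
lemma finite_A: "finite (carrier A)"
proof -
  have "0 < order A" using order_A q_pos by simp
  then show ?thesis by (simp add: order_gt_0_iff_finite)
qed
lemma card_A: "card (carrier A) = q ^ 3" using order_A by (simp add: order_def)
lemma B_carrier: "\<beta> \<in> B \<Longrightarrow> \<beta> \<in> carrier A" using subgroup.subset[OF subgroup_B] by blast
lemma B_central: "\<beta> \<in> B \<Longrightarrow> x \<in> carrier A \<Longrightarrow> \<beta> \<otimes> x = x \<otimes> \<beta>"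
  using B_central_subset by (auto simp: group_center_def)
lemma pow_q_eq_one: "x \<in> carrier A \<Longrightarrow> x [^] q = \<one>" using exponent_q by blast
lemma pow_mod_q: "x \<in> carrier A \<Longrightarrow> x [^] (k::nat) = x [^] (k mod q)"
  using nat_pow_mod_exponent pow_q_eq_one by blast
lemma B_one: "\<one> \<in> B" by (rule subgroup.one_closed[OF subgroup_B])
lemma B_mult: "x \<in> B \<Longrightarrow> y \<in> B \<Longrightarrow> x \<otimes> y \<in> B" by (rule subgroup.m_closed[OF subgroup_B])
lemma B_inv: "x \<in> B \<Longrightarrow> inv x \<in> B" by (rule subgroup.m_inv_closed[OF subgroup_B])
lemma B_pow: "x \<in> B \<Longrightarrow> x [^] (n::nat) \<in> B" by (rule subgroup_nat_pow_closed[OF subgroup_B])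

lemma mem_subgroup_of_pow:
  assumes S: "subgroup S A" and x: "x \<in> carrier A" and e: "x [^] (e::nat) \<in> S" "0 < e" "e < q"
  shows "x \<in> S"
proof -
  have "\<not> q dvd e" using e by (auto dest: dvd_imp_le)
  then have "coprime q e" using prime_q by (simp add: prime_imp_coprime)
  then show ?thesis using mem_subgroup_of_coprime_pow[OF S x pow_q_eq_one[OF x]] e(1) by blast
qed

lemma exists_notin_small_subset:
  assumes "S \<subseteq> carrier A" "card S < q ^ 3"
  shows "\<exists>x \<in> carrier A. x \<notin> S"
proof (rule ccontr)
  assume "\<not> ?thesis"
  then have "carrier A \<subseteq> S" by blast
  then have "card (carrier A) \<le> card S" using assms(1) finite_A by (metis card_mono finite_subset)
  then show False using assms(2) card_A by simp
qed

definition powers_B where "powers_B a = (\<lambda>(i, \<beta>). a [^] (i::nat) \<otimes> \<beta>) ` ({..<q} \<times> B)"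

lemma powers_BI: "i < q \<Longrightarrow> \<beta> \<in> B \<Longrightarrow> a [^] i \<otimes> \<beta> \<in> powers_B a"
  unfolding powers_B_def by force

lemma powers_BE: "x \<in> powers_B a \<Longrightarrow> (\<And>i \<beta>. i < q \<Longrightarrow> \<beta> \<in> B \<Longrightarrow> x = a [^] i \<otimes> \<beta> \<Longrightarrow> P) \<Longrightarrow> P"
  unfolding powers_B_def by auto

lemma subgroup_powers_B:
  assumes a: "a \<in> carrier A"
  shows "subgroup (powers_B a) A"
proof (rule subgroupI)
  show "powers_B a \<subseteq> carrier A" using a B_carrier unfolding powers_B_def by auto
  have "a [^] (0::nat) \<otimes> \<one> \<in> powers_B a" by (rule powers_BI[OF q_pos B_one])
  then show "powers_B a \<noteq> {}" by blast
  show "inv x \<in> powers_B a" if x: "x \<in> powers_B a" for x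
  proof -
    obtain i \<beta> where ib: "i < q" "\<beta> \<in> B" "x = a [^] i \<otimes> \<beta>" using x by (rule powers_BE)
    have \<beta>c: "\<beta> \<in> carrier A" using ib B_carrier by blast
    have ib': "inv \<beta> \<in> B" using ib B_inv by blast
    have "(a [^] (q - i) \<otimes> inv \<beta>) \<otimes> x = a [^] (q - i) \<otimes> (inv \<beta> \<otimes> a [^] i) \<otimes> \<beta>"
      using ib a \<beta>c by (simp add: m_assoc)
    also have "inv \<beta> \<otimes> a [^] i = a [^] i \<otimes> inv \<beta>" using B_central[OF ib'] a by simp
    also have "a [^] (q - i) \<otimes> (a [^] i \<otimes> inv \<beta>) \<otimes> \<beta> = a [^] (q - i + i)"
      using a \<beta>c by (simp add: m_assoc nat_pow_mult)
    also have "q - i + i = q" using ib by simp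
    finally have e: "(a [^] (q - i) \<otimes> inv \<beta>) \<otimes> x = \<one>" using pow_q_eq_one[OF a] by simp
    have xc: "x \<in> carrier A" using ib a \<beta>c by simp
    have "inv x = a [^] (q - i) \<otimes> inv \<beta>" by (rule inv_equality[OF e xc]) (use a \<beta>c in simp)
    also have "... = a [^] ((q - i) mod q) \<otimes> inv \<beta>" using pow_mod_q[OF a] by simp
    finally show ?thesis using powers_BI[of "(q - i) mod q" "inv \<beta>" a] ib' q_pos by simp
  qed
  show "x \<otimes> y \<in> powers_B a" if x: "x \<in> powers_B a" and y: "y \<in> powers_B a" for x y
  proof -
    obtain i \<beta> where ib: "i < q" "\<beta> \<in> B" "x = a [^] i \<otimes> \<beta>" using x by (rule powers_BE)
    obtain j \<gamma> where jg: "j < q" "\<gamma> \<in> B" "y = a [^] j \<otimes> \<gamma>" using y by (rule powers_BE)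
    have c: "\<beta> \<in> carrier A" "\<gamma> \<in> carrier A" using ib jg B_carrier by auto
    have "x \<otimes> y = a [^] i \<otimes> (\<beta> \<otimes> a [^] j) \<otimes> \<gamma>" using ib jg a c by (simp add: m_assoc)
    also have "\<beta> \<otimes> a [^] j = a [^] j \<otimes> \<beta>" using B_central[OF ib(2)] a by simp
    also have "a [^] i \<otimes> (a [^] j \<otimes> \<beta>) \<otimes> \<gamma> = a [^] (i + j) \<otimes> (\<beta> \<otimes> \<gamma>)"
      using a c by (simp add: m_assoc nat_pow_mult[symmetric])
    also have "... = a [^] ((i + j) mod q) \<otimes> (\<beta> \<otimes> \<gamma>)" using pow_mod_q[OF a] by simp
    finally show ?thesis using powers_BI[OF _ B_mult[OF ib(2) jg(2)]] q_pos by simp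
  qed
qed

lemma pow_mult_B_inj:
  assumes a: "a \<in> carrier A" "a \<notin> B" and ij: "i < q" "j < q" and b: "\<beta> \<in> B" "\<gamma> \<in> B"
    and e: "a [^] i \<otimes> \<beta> = a [^] j \<otimes> \<gamma>"
  shows "i = j"
proof -
  have diff: "a [^] (k - l) \<in> B" if "a [^] k \<otimes> \<beta>' = a [^] l \<otimes> \<gamma>'" "l \<le> k" "\<beta>' \<in> B" "\<gamma>' \<in> B"
    for k l :: nat and \<beta>' \<gamma>'
  proof -
    have c: "\<beta>' \<in> carrier A" "\<gamma>' \<in> carrier A" using that B_carrier by auto
    have "a [^] k = a [^] l \<otimes> a [^] (k - l)" using that(2) a by (simp add: nat_pow_mult)
    then have "a [^] l \<otimes> (a [^] (k - l) \<otimes> \<beta>') = a [^] l \<otimes> \<gamma>'"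
      using that(1) a c by (simp add: m_assoc)
    then have "a [^] (k - l) = \<gamma>' \<otimes> inv \<beta>'" using a c by (simp add: inv_solve_right)
    then show ?thesis using that B_mult B_inv by simp
  qed
  show "i = j"
  proof (rule ccontr)
    assume "i \<noteq> j"
    then have "a [^] (max i j - min i j) \<in> B" "0 < max i j - min i j" "max i j - min i j < q"
      using diff[OF e] diff[OF e[symmetric]] ij b by (auto simp: max_def min_def split: if_splits)
    then show False using mem_subgroup_of_pow[OF subgroup_B a(1)] a(2) by blast
  qed
qed

lemma card_powers_B:
  assumes a: "a \<in> carrier A" "a \<notin> B"
  shows "card (powers_B a) = q * q"
proof -
  have "inj_on (\<lambda>(i, \<beta>). a [^] (i::nat) \<otimes> \<beta>) ({..<q} \<times> B)"
  proof (rule inj_onI)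
    fix x y assume "x \<in> {..<q} \<times> B" "y \<in> {..<q} \<times> B"
      and e: "(\<lambda>(i, \<beta>). a [^] (i::nat) \<otimes> \<beta>) x = (\<lambda>(i, \<beta>). a [^] (i::nat) \<otimes> \<beta>) y"
    then obtain i \<beta> j \<gamma> where ij: "x = (i, \<beta>)" "y = (j, \<gamma>)" "i < q" "j < q" "\<beta> \<in> B" "\<gamma> \<in> B"
      by auto
    then have "i = j" using pow_mult_B_inj[OF a] e by simp
    then show "x = y" using ij e a(1) B_carrier by simp
  qed
  then have "card (powers_B a) = card ({..<q} \<times> B)" unfolding powers_B_def by (rule card_image)
  also have "\<dots> = q * q" using card_B by (simp add: card_cartesian_product)
  finally show ?thesis .
qed

lemma mem_powers_B_self: "a \<in> carrier A \<Longrightarrow> a \<in> powers_B a"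
  using powers_BI[of 1 \<one> a] q_ge_2 B_one by simp

lemma B_subset_powers_B: "B \<subseteq> powers_B a"
  using powers_BI[of 0 _ a] q_pos B_carrier by auto

lemma card_rcosets_powers_B:
  assumes "a \<in> carrier A" "a \<notin> B"
  shows "card (rcosets (powers_B a)) = q"
  using lagrange[OF subgroup_powers_B[OF assms(1)]] card_powers_B[OF assms] order_A q_pos
  by (simp add: power3_eq_cube)

lemma inj_on_rcos_conj_pow:
  assumes a: "a \<in> carrier A" and c: "c \<in> carrier A"
    and conj: "c \<otimes> a \<otimes> inv c \<notin> powers_B a"
  shows "inj_on (\<lambda>j. powers_B a #> (c \<otimes> a [^] j)) {..<q}"
proof -
  have D: "subgroup (powers_B a) A" by (rule subgroup_powers_B[OF a])
  have "j = k" if jk: "k \<le> j" "j < q" and e: "powers_B a #> (c \<otimes> a [^] j) = powers_B a #> (c \<otimes> a [^] k)"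
    for j k
  proof (rule ccontr)
    assume "j \<noteq> k"
    then have d: "0 < j - k" "j - k < q" using jk by auto
    have "a [^] j = a [^] (j - k) \<otimes> a [^] k" using jk a by (simp add: nat_pow_mult)
    then have "c \<otimes> a [^] j \<otimes> inv (c \<otimes> a [^] k) = (c \<otimes> a \<otimes> inv c) [^] (j - k)"
      using a c conj_nat_pow[OF c a, of "j - k"] by (simp add: m_assoc inv_mult_group)
    moreover have "c \<otimes> a [^] j \<otimes> inv (c \<otimes> a [^] k) \<in> powers_B a"
      using rcos_eq_iff_mult_inv[OF D] e a c by simp
    ultimately show False using mem_subgroup_of_pow[OF D _ _ d] a c conj by simp
  qed
  then show ?thesis by (intro inj_onI) (metis lessThan_iff nat_le_linear)
qed

text \<open>\<open>\<langle>a\<rangle>B\<close> has index \<open>q\<close>, so it is normal: otherwise the cosets of \<open>c a\<^sup>j\<close>,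
  \<open>j < q\<close>, and \<open>\<langle>a\<rangle>B\<close> itself would be \<open>q + 1\<close> distinct cosets.\<close>

lemma conj_mem_powers_B:
  assumes a: "a \<in> carrier A" "a \<notin> B" and c: "c \<in> carrier A" "c \<notin> powers_B a"
  shows "c \<otimes> a \<otimes> inv c \<in> powers_B a"
proof (rule ccontr)
  let ?D = "powers_B a"
  assume "c \<otimes> a \<otimes> inv c \<notin> ?D"
  note inj = inj_on_rcos_conj_pow[OF a(1) c(1) this]
  have D: "subgroup ?D A" by (rule subgroup_powers_B[OF a(1)])
  have gc: "c \<otimes> a [^] j \<in> carrier A" for j :: nat using a c by simp
  have "?D #> (c \<otimes> a [^] j) \<noteq> ?D" for j :: nat
  proof
    assume "?D #> (c \<otimes> a [^] j) = ?D"
    then have "c \<otimes> a [^] j \<in> ?D" using rcos_self[OF gc[of j] D] by simp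
    moreover have "inv (a [^] j) \<in> ?D"
      by (rule subgroup.m_inv_closed[OF D subgroup_nat_pow_closed[OF D mem_powers_B_self[OF a(1)]]])
    ultimately have "c \<otimes> a [^] j \<otimes> inv (a [^] j) \<in> ?D" by (rule subgroup.m_closed[OF D])
    then show False using a c by (simp add: m_assoc)
  qed
  then have "card (insert ?D ((\<lambda>j. ?D #> (c \<otimes> a [^] j)) ` {..<q})) = Suc q"
    using card_image[OF inj] by (subst card_insert_disjoint) auto
  moreover have "insert ?D ((\<lambda>j. ?D #> (c \<otimes> a [^] j)) ` {..<q}) \<subseteq> rcosets ?D"
    using rcosetsI[OF subgroup.subset[OF D] gc] rcosetsI[OF subgroup.subset[OF D] one_closed]
      coset_mult_one[OF subgroup.subset[OF D]] by auto
  moreover have "finite (rcosets ?D)"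
    using finite_subset[OF rcosets_subset_PowG[OF D]] finite_A by simp
  ultimately have "Suc q \<le> q" using card_mono card_rcosets_powers_B[OF a] by metis
  then show False by simp
qed

lemma conj_B_eq: "\<beta> \<in> B \<Longrightarrow> c \<in> carrier A \<Longrightarrow> c \<otimes> \<beta> \<otimes> inv c = \<beta>"
  using B_central B_carrier by (metis inv_closed inv_solve_right m_closed)

lemma iterated_conj_mod_B:
  assumes a: "a \<in> carrier A" and c: "c \<in> carrier A" and s: "c \<otimes> a \<otimes> inv c = a [^] (s::nat) \<otimes> \<beta>" "\<beta> \<in> B"
  shows "\<exists>\<gamma>\<in>B. c [^] (k::nat) \<otimes> a \<otimes> inv (c [^] k) = a [^] (s ^ k) \<otimes> \<gamma>"
proof (induction k)
  case 0
  then show ?case using a B_one by (intro bexI[of _ \<one>]) auto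
next
  case (Suc k)
  then obtain \<gamma> where g: "\<gamma> \<in> B" "c [^] k \<otimes> a \<otimes> inv (c [^] k) = a [^] (s ^ k) \<otimes> \<gamma>" by blast
  have bc: "\<beta> \<in> carrier A" "\<gamma> \<in> carrier A" using s g B_carrier by auto
  have "c [^] Suc k \<otimes> a \<otimes> inv (c [^] Suc k) = c \<otimes> (c [^] k \<otimes> a \<otimes> inv (c [^] k)) \<otimes> inv c"
    using a c by (simp only: nat_pow_Suc2[OF c]) (simp add: m_assoc inv_mult_group)
  also have "\<dots> = (c \<otimes> a [^] (s ^ k) \<otimes> inv c) \<otimes> (c \<otimes> \<gamma> \<otimes> inv c)"
    using g a c bc by (simp add: m_assoc)
  also have "c \<otimes> \<gamma> \<otimes> inv c = \<gamma>" using conj_B_eq g c by blast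
  also have "c \<otimes> a [^] (s ^ k) \<otimes> inv c = (a [^] s \<otimes> \<beta>) [^] (s ^ k)"
    using conj_nat_pow[OF c a, of "s ^ k"] s by simp
  also have "\<dots> = a [^] (s ^ Suc k) \<otimes> \<beta> [^] (s ^ k)"
    using B_central[OF s(2)] a bc by (simp add: pow_mult_distrib nat_pow_pow)
  finally have "c [^] Suc k \<otimes> a \<otimes> inv (c [^] Suc k) = a [^] (s ^ Suc k) \<otimes> (\<beta> [^] (s ^ k) \<otimes> \<gamma>)"
    using a bc by (simp add: m_assoc)
  moreover have "\<beta> [^] (s ^ k) \<otimes> \<gamma> \<in> B" using B_mult[OF B_pow[OF s(2)] g(1)] .
  ultimately show ?case by blast
qed

text \<open>Conjugating \<open>q\<close> times by \<open>c\<close> turns \<open>a \<mapsto> a\<^sup>s\<close> (mod \<open>B\<close>) into \<open>a \<mapsto> a\<^bsup>s\<^sup>q\<^esup> = a\<^sup>s\<close>,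
  while \<open>c\<^sup>q = \<one>\<close>; hence \<open>s = 1\<close>.\<close>

lemma conj_eq_mod_B:
  assumes a: "a \<in> carrier A" "a \<notin> B" and c: "c \<in> carrier A" "c \<notin> powers_B a"
  shows "\<exists>\<beta>\<in>B. c \<otimes> a \<otimes> inv c = a \<otimes> \<beta>"
proof -
  obtain s \<beta> where sb: "s < q" "\<beta> \<in> B" "c \<otimes> a \<otimes> inv c = a [^] s \<otimes> \<beta>"
    using conj_mem_powers_B[OF a c] by (rule powers_BE)
  obtain \<gamma> where g: "\<gamma> \<in> B" "c [^] q \<otimes> a \<otimes> inv (c [^] q) = a [^] (s ^ q) \<otimes> \<gamma>"
    using iterated_conj_mod_B[OF a(1) c(1) sb(3) sb(2)] by blast
  have "a [^] (s ^ q) = a [^] s" using pow_mod_q[OF a(1), of "s ^ q"] fermat_mod[OF prime_q sb(1)] by simp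
  then have "a [^] s \<otimes> \<gamma> = a [^] (1::nat) \<otimes> \<one>" using g pow_q_eq_one[OF c(1)] a by simp
  then have "s = 1" using pow_mult_B_inj[OF a sb(1) _ g(1) B_one] q_ge_2 by simp
  then show ?thesis using sb a(1) by auto
qed

lemma exists_commuting_pair_mod_B:
  "\<exists>a c. a \<in> carrier A \<and> c \<in> carrier A \<and> c \<notin> B \<and> (\<forall>j<q. a \<otimes> c [^] j \<notin> B)
     \<and> (\<exists>\<beta>\<in>B. c \<otimes> a = a \<otimes> c \<otimes> \<beta>)"
proof -
  have "q ^ 1 < q ^ 3" "q ^ 2 < q ^ 3" using q_ge_2 by (simp_all only: power_strict_increasing_iff)
  then obtain a where a: "a \<in> carrier A" "a \<notin> B"
    using exists_notin_small_subset subgroup.subset[OF subgroup_B] card_B by auto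
  have D: "subgroup (powers_B a) A" by (rule subgroup_powers_B[OF a(1)])
  obtain c where c: "c \<in> carrier A" "c \<notin> powers_B a"
    using exists_notin_small_subset[OF subgroup.subset[OF D]] card_powers_B[OF a] \<open>q ^ 2 < q ^ 3\<close>
    by (auto simp: power2_eq_square)
  have "a \<otimes> c [^] j \<notin> B" if j: "j < q" for j
  proof
    assume acj: "a \<otimes> c [^] j \<in> B"
    then have "inv a \<otimes> (a \<otimes> c [^] j) \<in> powers_B a"
      using B_subset_powers_B mem_powers_B_self[OF a(1)]
      by (blast intro: subgroup.m_closed[OF D] subgroup.m_inv_closed[OF D])
    then have "c [^] j \<in> powers_B a" using a c by (simp add: m_assoc[symmetric])
    moreover have "j \<noteq> 0" using acj a by (cases "j = 0") auto
    ultimately show False using mem_subgroup_of_pow[OF D c(1), of j] j c(2) by simp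
  qed
  moreover obtain \<beta> where b: "\<beta> \<in> B" "c \<otimes> a \<otimes> inv c = a \<otimes> \<beta>" using conj_eq_mod_B[OF a c] by blast
  moreover have "c \<otimes> a = a \<otimes> c \<otimes> \<beta>"
  proof -
    have bc: "\<beta> \<in> carrier A" using b B_carrier by blast
    have "c \<otimes> a = (c \<otimes> a \<otimes> inv c) \<otimes> c" using a c by (simp add: m_assoc)
    also have "\<dots> = a \<otimes> (c \<otimes> \<beta>)" using b a bc c B_central[OF b(1) c(1)] by (simp add: m_assoc)
    finally show ?thesis using a c bc by (simp add: m_assoc)
  qed
  ultimately show ?thesis using a c B_subset_powers_B by blast
qed

lemma exists_nontrivial_B: "\<exists>b \<in> B. b \<noteq> \<one>"
proof (rule ccontr)
  assume "\<not> ?thesis"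
  then have "B \<subseteq> {\<one>}" by blast
  then have "card B \<le> card {\<one>}" by (intro card_mono) auto
  then have "card B \<le> 1" by simp
  then show False using card_B q_ge_2 by simp
qed

end

section \<open>Commutators and the lower central series\<close>

context group
begin

definition commutator :: "'a \<Rightarrow> 'a \<Rightarrow> 'a" where
  "commutator x y = inv x \<otimes> inv y \<otimes> x \<otimes> y"

lemma comm_subgroup_eq: "comm_subgroup G S T = generate G ((\<lambda>(x, y). commutator x y) ` (S \<times> T))"
  unfolding comm_subgroup_def commutator_def ..

lemma commutator_closed [simp]: "x \<in> carrier G \<Longrightarrow> y \<in> carrier G \<Longrightarrow> commutator x y \<in> carrier G"
  unfolding commutator_def by simp

lemma commutator_one_left: "y \<in> carrier G \<Longrightarrow> commutator \<one> y = \<one>"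
  unfolding commutator_def by (simp add: m_assoc)

lemma hom_commutator:
  assumes "f \<in> hom G G" "x \<in> carrier G" "y \<in> carrier G"
  shows "f (commutator x y) = commutator (f x) (f y)"
proof -
  interpret f: group_hom G G f using assms(1) by (simp add: group_hom_def group_hom_axioms_def is_group)
  show ?thesis unfolding commutator_def using assms(2,3) by simp
qed

lemma conj_hom: "h \<in> carrier G \<Longrightarrow> (\<lambda>x. h \<otimes> x \<otimes> inv h) \<in> hom G G"
  by (auto simp: hom_def m_assoc)

lemma commutator_mem_subgroup: "subgroup S G \<Longrightarrow> x \<in> S \<Longrightarrow> y \<in> S \<Longrightarrow> commutator x y \<in> S"
  unfolding commutator_def by (intro subgroup.m_closed subgroup.m_inv_closed) auto

lemma commutator_mult_right:
  assumes x: "x \<in> carrier G" and h: "h \<in> carrier G" "k \<in> carrier G"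
  shows "commutator x (h \<otimes> k) = commutator x k \<otimes> (commutator x h \<otimes> commutator (commutator x h) k)"
proof -
  define z where "z = commutator x h"
  have z: "z \<in> carrier G" unfolding z_def using x h by simp
  have "z \<otimes> commutator z k = inv k \<otimes> z \<otimes> k"
    unfolding commutator_def using z h by (simp add: m_assoc)
  moreover have "commutator x (h \<otimes> k) = commutator x k \<otimes> (inv k \<otimes> z \<otimes> k)"
    unfolding z_def commutator_def using x h by (simp add: m_assoc inv_mult_group)
  ultimately show ?thesis unfolding z_def by simp
qed

lemma commutator_inv_right:
  assumes "x \<in> carrier G" "h \<in> carrier G"
  shows "commutator x (inv h) = inv (commutator (h \<otimes> x \<otimes> inv h) h)"
proof -
  have "commutator x (inv h) \<otimes> commutator (h \<otimes> x \<otimes> inv h) h = \<one>"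
    unfolding commutator_def using assms by (simp add: m_assoc inv_mult_group)
  then show ?thesis using assms by (intro inv_equality[symmetric]) auto
qed

lemma commutator_mem_normal:
  assumes "P \<lhd> G" "x \<in> P" "g \<in> carrier G"
  shows "commutator x g \<in> P"
proof -
  have xc: "x \<in> carrier G" using assms normal_imp_subgroup subgroup.subset by blast
  have "commutator x g = inv x \<otimes> (inv g \<otimes> x \<otimes> inv (inv g))"
    unfolding commutator_def using xc assms(3) by (simp add: m_assoc)
  then show ?thesis
    using assms normal_invE(2)[OF assms(1), of "inv g" x] normal_imp_subgroup[OF assms(1)]
    by (simp add: subgroup.m_closed subgroup.m_inv_closed)
qed

lemma commutator_mult_left_abelian:
  assumes P: "P \<lhd> G" and ab: "\<forall>x \<in> P. \<forall>y \<in> P. x \<otimes> y = y \<otimes> x"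
    and x: "x \<in> P" and y: "y \<in> P" and g: "g \<in> carrier G"
  shows "commutator (x \<otimes> y) g = commutator x g \<otimes> commutator y g"
proof -
  interpret P: subgroup P G by (rule normal_imp_subgroup[OF P])
  define c where "c z = inv g \<otimes> z \<otimes> g" for z
  have cP: "c z \<in> P" if "z \<in> P" for z
    unfolding c_def using normal_invE(2)[OF P, of "inv g" z] that g by simp
  have c_def': "commutator z g = inv z \<otimes> c z" if "z \<in> P" for z
    unfolding commutator_def c_def using that g by (simp add: m_assoc)
  have "commutator (x \<otimes> y) g = (inv x \<otimes> inv y) \<otimes> (c x \<otimes> c y)"
    using c_def'[of "x \<otimes> y"] x y g by (simp add: c_def m_assoc inv_mult_group ab)
  also have "\<dots> = inv x \<otimes> (inv y \<otimes> c x) \<otimes> c y"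
    using x y cP by (simp add: m_assoc)
  also have "inv y \<otimes> c x = c x \<otimes> inv y" using ab cP[OF x] y by simp
  also have "inv x \<otimes> (c x \<otimes> inv y) \<otimes> c y = commutator x g \<otimes> commutator y g"
    using x y cP by (simp add: c_def' m_assoc)
  finally show ?thesis .
qed

lemma commutator_inv_left_abelian:
  assumes P: "P \<lhd> G" and ab: "\<forall>x \<in> P. \<forall>y \<in> P. x \<otimes> y = y \<otimes> x"
    and x: "x \<in> P" and g: "g \<in> carrier G"
  shows "commutator (inv x) g = inv (commutator x g)"
proof -
  interpret P: subgroup P G by (rule normal_imp_subgroup[OF P])
  have "commutator (inv x) g \<otimes> commutator x g = \<one>"
    using commutator_mult_left_abelian[OF P ab P.m_inv_closed[OF x] x g] x g
    by (simp add: commutator_one_left)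
  then show ?thesis using x g by (simp add: inv_equality)
qed

text \<open>Closure under products: \<open>[x, h k] = [x, k] [x, h] [[x, h], k]\<close> with \<open>[x, h] \<in> P\<close>.\<close>

lemma subgroup_commutator_preimage:
  assumes P: "P \<lhd> G" and T: "subgroup T G"
  shows "subgroup {k \<in> carrier G. \<forall>x \<in> P. commutator x k \<in> T} G"
proof (rule subgroupI)
  have Pc: "x \<in> carrier G" if "x \<in> P" for x using that P normal_imp_subgroup subgroup.subset by blast
  show "{k \<in> carrier G. \<forall>x \<in> P. commutator x k \<in> T} \<noteq> {}"
    using Pc subgroup.one_closed[OF T] by (auto simp: commutator_def)
  show "inv k \<in> {k \<in> carrier G. \<forall>x \<in> P. commutator x k \<in> T}"
    if "k \<in> {k \<in> carrier G. \<forall>x \<in> P. commutator x k \<in> T}" for k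
    using that normal_invE(2)[OF P] Pc
    by (auto simp: commutator_inv_right intro: subgroup.m_inv_closed[OF T])
  show "h \<otimes> k \<in> {k \<in> carrier G. \<forall>x \<in> P. commutator x k \<in> T}"
    if "h \<in> {k \<in> carrier G. \<forall>x \<in> P. commutator x k \<in> T}"
      "k \<in> {k \<in> carrier G. \<forall>x \<in> P. commutator x k \<in> T}" for h k
    using that commutator_mem_normal[OF P] Pc
    by (auto simp: commutator_mult_right intro!: subgroup.m_closed[OF T])
qed auto

lemma subgroup_commutator_left_preimage:
  assumes P: "P \<lhd> G" and ab: "\<forall>x \<in> P. \<forall>y \<in> P. x \<otimes> y = y \<otimes> x"
    and T: "subgroup T G" and h: "h \<in> carrier G"
  shows "subgroup {w \<in> P. commutator w h \<in> T} (G\<lparr>carrier := P\<rparr>)"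
proof -
  interpret P: subgroup P G by (rule normal_imp_subgroup[OF P])
  have "subgroup {w \<in> P. commutator w h \<in> T} G"
  proof (rule subgroupI)
    have "\<one> \<in> {w \<in> P. commutator w h \<in> T}"
      using commutator_one_left[OF h] subgroup.one_closed[OF T] by simp
    then show "{w \<in> P. commutator w h \<in> T} \<noteq> {}" by blast
    show "inv x \<in> {w \<in> P. commutator w h \<in> T}" if "x \<in> {w \<in> P. commutator w h \<in> T}" for x
      using that by (simp add: commutator_inv_left_abelian[OF P ab _ h] subgroup.m_inv_closed[OF T])
    show "x \<otimes> y \<in> {w \<in> P. commutator w h \<in> T}"
      if "x \<in> {w \<in> P. commutator w h \<in> T}" "y \<in> {w \<in> P. commutator w h \<in> T}" for x y
      using that by (simp add: commutator_mult_left_abelian[OF P ab _ _ h] subgroup.m_closed[OF T])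
  qed (use P.subset in auto)
  then show ?thesis by (rule subgroup_incl[OF _ P.subgroup_axioms]) blast
qed

lemma lower_central_Suc_eq:
  "lower_central G H (Suc i) = generate G ((\<lambda>(x, y). commutator x y) ` (lower_central G H i \<times> H))"
  by (simp add: comm_subgroup_eq)

lemma lower_central_subset:
  assumes "subgroup H G"
  shows "lower_central G H i \<subseteq> H"
proof (induction i)
  case 0
  then show ?case by simp
next
  case (Suc i)
  then show ?case unfolding lower_central_Suc_eq
    by (intro generate_subgroup_incl[OF _ assms]) (auto intro: commutator_mem_subgroup[OF assms])
qed

lemma lower_central_subgroup:
  assumes "subgroup H G"
  shows "subgroup (lower_central G H i) G"
proof (cases i)
  case 0
  then show ?thesis using assms by simp
next
  case (Suc j)
  have "(\<lambda>(x, y). commutator x y) ` (lower_central G H j \<times> H) \<subseteq> carrier G"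
    using lower_central_subset[OF assms, of j] subgroup.subset[OF assms] by (auto simp: subset_iff)
  then show ?thesis unfolding Suc lower_central_Suc_eq by (rule generate_is_subgroup)
qed

lemma generate_hom_closed:
  assumes "f \<in> hom G G" "S \<subseteq> carrier G" "f ` S \<subseteq> S" "x \<in> generate G S"
  shows "f x \<in> generate G S"
proof -
  interpret f: group_hom G G f using assms(1) by (simp add: group_hom_def group_hom_axioms_def is_group)
  have "f x \<in> generate G (f ` S)" using f.generate_img[OF assms(2)] assms(4) by blast
  then show ?thesis using mono_generate[OF assms(3)] by blast
qed

lemma lower_central_hom_closed:
  assumes H: "subgroup H G" and f: "f \<in> hom G G" "f ` H \<subseteq> H"
  shows "f ` lower_central G H i \<subseteq> lower_central G H i"
proof (induction i)
  case 0
  then show ?case using f by simp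
next
  case (Suc i)
  have lc: "x \<in> carrier G" if "x \<in> lower_central G H i" for x
    using that lower_central_subset[OF H] subgroup.subset[OF H] by blast
  have Hc: "x \<in> carrier G" if "x \<in> H" for x using that subgroup.subset[OF H] by blast
  have "f ` ((\<lambda>(x, y). commutator x y) ` (lower_central G H i \<times> H))
      \<subseteq> (\<lambda>(x, y). commutator x y) ` (lower_central G H i \<times> H)"
    using Suc f lc Hc by (force simp: hom_commutator)
  then show ?case unfolding lower_central_Suc_eq
    using lc Hc by (auto intro!: generate_hom_closed[OF f(1)])
qed

lemma lower_central_normalized:
  assumes H: "subgroup H G" and "h \<in> H" "x \<in> lower_central G H i"
  shows "h \<otimes> x \<otimes> inv h \<in> lower_central G H i"
proof -
  have h: "h \<in> carrier G" using assms subgroup.subset by blast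
  have "(\<lambda>x. h \<otimes> x \<otimes> inv h) ` H \<subseteq> H"
    using assms(2) by (auto intro!: subgroup.m_closed[OF H] subgroup.m_inv_closed[OF H])
  then show ?thesis using lower_central_hom_closed[OF H conj_hom[OF h]] assms(3) by blast
qed

lemma commutator_mem_lower_central_Suc:
  "x \<in> lower_central G H i \<Longrightarrow> y \<in> H \<Longrightarrow> commutator x y \<in> lower_central G H (Suc i)"
  unfolding lower_central_Suc_eq by (rule generate.incl) blast

lemma lower_central_Suc_subset:
  assumes H: "subgroup H G"
  shows "lower_central G H (Suc i) \<subseteq> lower_central G H i"
  unfolding lower_central_Suc_eq
proof (rule generate_subgroup_incl[OF _ lower_central_subgroup[OF H]], clarify)
  fix x y assume x: "x \<in> lower_central G H i" and y: "y \<in> H"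
  have c: "x \<in> carrier G" "y \<in> carrier G"
    using x y lower_central_subset[OF H] subgroup.subset[OF H] by auto
  have "commutator x y = inv x \<otimes> (inv y \<otimes> x \<otimes> inv (inv y))"
    unfolding commutator_def using c by (simp add: m_assoc)
  then show "commutator x y \<in> lower_central G H i"
    using lower_central_normalized[OF H subgroup.m_inv_closed[OF H y] x] x lower_central_subgroup[OF H]
    by (simp add: subgroup.m_closed subgroup.m_inv_closed)
qed

lemma lower_central_antimono:
  assumes "subgroup H G" "i \<le> j"
  shows "lower_central G H j \<subseteq> lower_central G H i"
  using assms(2) by (induction j rule: dec_induct) (use lower_central_Suc_subset[OF assms(1)] in auto)

end

locale automorphic_action = group G + A: group A + group_action A "carrier G" \<phi>
  for G :: "('g, 'd) monoid_scheme" (structure) and A :: "('a, 'c) monoid_scheme" and \<phi> +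
  assumes act_hom: "a \<in> carrier A \<Longrightarrow> \<phi> a \<in> hom G G"
begin

lemma act_closed [simp]: "a \<in> carrier A \<Longrightarrow> x \<in> carrier G \<Longrightarrow> \<phi> a x \<in> carrier G"
  using act_hom by (auto simp: hom_def)

lemma act_group_hom: "a \<in> carrier A \<Longrightarrow> group_hom G G (\<phi> a)"
  using act_hom by (simp add: group_hom_def group_hom_axioms_def is_group)

lemma act_mult: "a \<in> carrier A \<Longrightarrow> x \<in> carrier G \<Longrightarrow> y \<in> carrier G \<Longrightarrow> \<phi> a (x \<otimes> y) = \<phi> a x \<otimes> \<phi> a y"
  using act_hom by (auto simp: hom_def)

lemma act_inv: "a \<in> carrier A \<Longrightarrow> x \<in> carrier G \<Longrightarrow> \<phi> a (inv x) = inv (\<phi> a x)"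
  using group_hom.hom_inv[OF act_group_hom] by blast

lemma act_one: "a \<in> carrier A \<Longrightarrow> \<phi> a \<one> = \<one>"
  using group_hom.hom_one[OF act_group_hom] by blast

lemma act_comp: "a \<in> carrier A \<Longrightarrow> b \<in> carrier A \<Longrightarrow> x \<in> carrier G \<Longrightarrow> \<phi> (a \<otimes>\<^bsub>A\<^esub> b) x = \<phi> a (\<phi> b x)"
  using composition_rule by blast

lemma act_unit: "x \<in> carrier G \<Longrightarrow> \<phi> \<one>\<^bsub>A\<^esub> x = x"
  using fun_cong[OF id_eq_one, of x] by simp

lemma act_funpow: "a \<in> carrier A \<Longrightarrow> x \<in> carrier G \<Longrightarrow> (\<phi> a ^^ k) x = \<phi> (a [^]\<^bsub>A\<^esub> k) x"
proof (induction k)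
  case 0
  then show ?case by (simp add: act_unit)
next
  case (Suc k)
  then have "(\<phi> a ^^ Suc k) x = \<phi> (a \<otimes>\<^bsub>A\<^esub> a [^]\<^bsub>A\<^esub> k) x"
    by (simp add: act_comp)
  then show ?case using Suc.prems(1) by (simp only: A.nat_pow_Suc2)
qed

lemma act_commute:
  "a \<in> carrier A \<Longrightarrow> b \<in> carrier A \<Longrightarrow> a \<otimes>\<^bsub>A\<^esub> b = b \<otimes>\<^bsub>A\<^esub> a \<Longrightarrow> x \<in> carrier G
    \<Longrightarrow> \<phi> a (\<phi> b x) = \<phi> b (\<phi> a x)"
  by (metis act_comp)

lemma act_image_eq:
  assumes "S \<subseteq> carrier G" "\<And>a y. a \<in> carrier A \<Longrightarrow> y \<in> S \<Longrightarrow> \<phi> a y \<in> S" "a \<in> carrier A"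
  shows "\<phi> a ` S = S"
proof
  show "\<phi> a ` S \<subseteq> S" using assms by blast
  show "S \<subseteq> \<phi> a ` S"
  proof
    fix y assume y: "y \<in> S"
    then have "y = \<phi> a (\<phi> (inv\<^bsub>A\<^esub> a) y)"
      using assms act_comp[of a "inv\<^bsub>A\<^esub> a" y] by (auto simp: act_unit)
    then show "y \<in> \<phi> a ` S" using assms(2)[of "inv\<^bsub>A\<^esub> a" y] y assms(3) by blast
  qed
qed

lemma act_rcos:
  assumes "a \<in> carrier A" "S \<subseteq> carrier G" "x \<in> carrier G"
  shows "\<phi> a ` (S #> x) = (\<phi> a ` S) #> \<phi> a x"
proof -
  have "\<phi> a ` (S #> x) = (\<lambda>h. \<phi> a (h \<otimes> x)) ` S" unfolding r_coset_def by auto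
  also have "\<dots> = (\<lambda>h. \<phi> a h \<otimes> \<phi> a x) ` S"
    using assms by (intro image_cong) (auto simp: act_mult)
  finally show ?thesis unfolding r_coset_def by auto
qed

lemma subgroup_fixed_points:
  assumes "subgroup S G" "X \<subseteq> carrier A"
  shows "subgroup (fixed_points \<phi> S X) G"
proof -
  interpret S: subgroup S G by (rule assms(1))
  have "\<one> \<in> fixed_points \<phi> S X"
    unfolding fixed_points_def using assms(2) by (auto simp: act_one)
  then show ?thesis
  proof (intro subgroupI)
    show "fixed_points \<phi> S X \<noteq> {}" if "\<one> \<in> fixed_points \<phi> S X" using that by blast
  qed (use assms(2) in \<open>auto simp: fixed_points_def act_inv act_mult subset_iff\<close>)
qed

end

section \<open>The coprime action on \<open>P\<close> and on \<open>C\<^sub>H(B)\<close>\<close>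

locale coprime_action_setting = automorphic_action G A \<phi> + Acube: cube_group A q B
  for G :: "('g, 'd) monoid_scheme" (structure) and A :: "('a, 'c) monoid_scheme" and \<phi> q B +
  fixes P H :: "'g set"
  assumes finite_G: "finite (carrier G)" and coprime_order: "coprime (order G) q"
    and subgroup_P: "subgroup P G" and subgroup_H: "subgroup H G"
    and P_invariant: "\<forall>a \<in> carrier A. \<phi> a ` P = P"
    and H_invariant: "\<forall>a \<in> carrier A. \<phi> a ` H = H"
    and normal_P: "P \<lhd> G" and nilpotent_H: "nilpotent_subgroup G H"
    and abelian_P: "\<forall>x \<in> P. \<forall>y \<in> P. x \<otimes> y = y \<otimes> x"
begin

lemma P_carrier: "x \<in> P \<Longrightarrow> x \<in> carrier G" using subgroup.subset[OF subgroup_P] by blast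
lemma H_carrier: "x \<in> H \<Longrightarrow> x \<in> carrier G" using subgroup.subset[OF subgroup_H] by blast
lemma act_P: "a \<in> carrier A \<Longrightarrow> x \<in> P \<Longrightarrow> \<phi> a x \<in> P" using P_invariant by blast
lemma act_H: "a \<in> carrier A \<Longrightarrow> x \<in> H \<Longrightarrow> \<phi> a x \<in> H" using H_invariant by blast

lemma act_period: "a \<in> carrier A \<Longrightarrow> x \<in> carrier G \<Longrightarrow> (\<phi> a ^^ q) x = x"
  using Acube.pow_q_eq_one by (simp add: act_funpow act_unit)

lemma exponent_order_G: "x \<in> carrier G \<Longrightarrow> x [^] order G = \<one>"
  by (rule pow_order_eq_1)

definition fixed_commutators :: "'g set" where
  "fixed_commutators = generate G (\<Union>a \<in> carrier A - {\<one>\<^bsub>A\<^esub>}.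
     comm_subgroup G (fixed_points \<phi> P {a}) (fixed_points \<phi> H {a}))"

lemma subgroup_fixed_commutators: "subgroup fixed_commutators G"
proof -
  have "comm_subgroup G (fixed_points \<phi> P {a}) (fixed_points \<phi> H {a}) \<subseteq> carrier G" for a
    unfolding comm_subgroup_eq
    by (rule generate_incl) (auto simp: fixed_points_def P_carrier H_carrier)
  then show ?thesis unfolding fixed_commutators_def by (intro generate_is_subgroup) blast
qed

lemma commutator_mem_fixed_commutators:
  assumes "a \<in> carrier A" "a \<noteq> \<one>\<^bsub>A\<^esub>" "x \<in> P" "\<phi> a x = x" "h \<in> H" "\<phi> a h = h"
  shows "commutator x h \<in> fixed_commutators"
proof -
  have "commutator x h \<in> comm_subgroup G (fixed_points \<phi> P {a}) (fixed_points \<phi> H {a})"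
    unfolding comm_subgroup_eq by (rule generate.incl) (use assms in \<open>auto simp: fixed_points_def\<close>)
  then show ?thesis unfolding fixed_commutators_def using assms(1,2) by (blast intro: generate.incl)
qed

lemma comm_group_P: "comm_group (G\<lparr>carrier := P\<rparr>)"
  using subgroup.subgroup_is_group[OF subgroup_P is_group] abelian_P
  by (intro group.group_comm_groupI) auto

lemma act_hom_P: "a \<in> carrier A \<Longrightarrow> \<phi> a \<in> hom (G\<lparr>carrier := P\<rparr>) (G\<lparr>carrier := P\<rparr>)"
  by (auto simp: hom_def act_P act_mult P_carrier)

text \<open>Generation by fixed points for \<open>\<langle>a, b\<rangle>\<close> acting on \<open>P\<close>, applied to the subgroup
  of those \<open>w\<close> with \<open>[w, h] \<in> fixed_commutators\<close>.\<close>

lemma commutator_mem_fixed_commutators_of_pair: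
  assumes a: "a \<in> carrier A" and b: "b \<in> carrier A" and ab: "a \<otimes>\<^bsub>A\<^esub> b = b \<otimes>\<^bsub>A\<^esub> a"
    and b1: "b \<noteq> \<one>\<^bsub>A\<^esub>" and ab1: "\<And>j. j < q \<Longrightarrow> a \<otimes>\<^bsub>A\<^esub> b [^]\<^bsub>A\<^esub> j \<noteq> \<one>\<^bsub>A\<^esub>"
    and h: "h \<in> H" "\<phi> a h = h" "\<phi> b h = h" and x: "x \<in> P"
  shows "commutator x h \<in> fixed_commutators"
proof -
  interpret Q: comm_group "G\<lparr>carrier := P\<rparr>" by (rule comm_group_P)
  define W where "W = {w \<in> P. commutator w h \<in> fixed_commutators}"
  have W: "subgroup W (G\<lparr>carrier := P\<rparr>)"
    unfolding W_def using normal_P abelian_P subgroup_fixed_commutators H_carrier[OF h(1)]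
    by (rule subgroup_commutator_left_preimage)
  have ab_fixes_h: "\<phi> (a \<otimes>\<^bsub>A\<^esub> b [^]\<^bsub>A\<^esub> j) h = h" for j :: nat
  proof -
    have "(\<phi> b ^^ j) h = h" using h by (induction j) auto
    then show ?thesis using a b h by (simp add: act_comp act_funpow H_carrier)
  qed
  have "x \<in> W"
  proof (rule Q.mem_subgroup_containing_fixed_points[OF Acube.prime_q act_hom_P[OF a] act_hom_P[OF b] _ _ _ W])
    show "\<phi> a (\<phi> b y) = \<phi> b (\<phi> a y)" if "y \<in> carrier (G\<lparr>carrier := P\<rparr>)" for y
      using that act_commute[OF a b ab] P_carrier by simp
    show "(\<phi> a ^^ q) y = y" "(\<phi> b ^^ q) y = y" if "y \<in> carrier (G\<lparr>carrier := P\<rparr>)" for y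
      using that act_period a b P_carrier by auto
    show "y [^]\<^bsub>G\<lparr>carrier := P\<rparr>\<^esub> order G = \<one>\<^bsub>G\<lparr>carrier := P\<rparr>\<^esub>" if "y \<in> carrier (G\<lparr>carrier := P\<rparr>)" for y
      using that exponent_order_G P_carrier nat_pow_consistent[of y "order G" P] by simp
    show "w \<in> W" if "j < q" "w \<in> carrier (G\<lparr>carrier := P\<rparr>)" "\<phi> a ((\<phi> b ^^ j) w) = w" for j w
      using that a b ab1[of j] ab_fixes_h h(1)
      by (auto simp: W_def act_comp act_funpow P_carrier
          intro!: commutator_mem_fixed_commutators[of "a \<otimes>\<^bsub>A\<^esub> b [^]\<^bsub>A\<^esub> j"])
    show "w \<in> W" if "w \<in> carrier (G\<lparr>carrier := P\<rparr>)" "\<phi> b w = w" for w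
      using that b b1 h by (auto simp: W_def intro!: commutator_mem_fixed_commutators)
  qed (use coprime_order x in auto)
  then show ?thesis unfolding W_def by blast
qed

definition CHB :: "'g set" where "CHB = fixed_points \<phi> H B"

definition CHB_series :: "nat \<Rightarrow> 'g set" where "CHB_series i = CHB \<inter> lower_central G H i"

lemma CHB_subset_H: "CHB \<subseteq> H" unfolding CHB_def fixed_points_def by blast
lemma CHB_carrier: "x \<in> CHB \<Longrightarrow> x \<in> carrier G" using CHB_subset_H H_carrier by blast
lemma CHB_fixed: "x \<in> CHB \<Longrightarrow> b \<in> B \<Longrightarrow> \<phi> b x = x" unfolding CHB_def fixed_points_def by blast

lemma subgroup_CHB: "subgroup CHB G"
  unfolding CHB_def using subgroup_fixed_points[OF subgroup_H] subgroup.subset[OF Acube.subgroup_B] .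

lemma act_CHB:
  assumes a: "a \<in> carrier A" and y: "y \<in> CHB"
  shows "\<phi> a y \<in> CHB"
proof -
  have "\<phi> b (\<phi> a y) = \<phi> a y" if b: "b \<in> B" for b
  proof -
    have "\<phi> b (\<phi> a y) = \<phi> (a \<otimes>\<^bsub>A\<^esub> b) y"
      using a b y Acube.B_carrier Acube.B_central CHB_carrier by (simp add: act_comp[symmetric])
    also have "\<dots> = \<phi> a y" using a b y Acube.B_carrier CHB_carrier CHB_fixed by (simp add: act_comp)
    finally show ?thesis .
  qed
  then show ?thesis using act_H[OF a] y CHB_subset_H unfolding CHB_def fixed_points_def by auto
qed

lemma act_lower_central: "a \<in> carrier A \<Longrightarrow> x \<in> lower_central G H i \<Longrightarrow> \<phi> a x \<in> lower_central G H i"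
  using lower_central_hom_closed[OF subgroup_H act_hom, of a] act_H by blast

lemma subgroup_CHB_series: "subgroup (CHB_series i) G"
  unfolding CHB_series_def by (rule subgroups_Inter_pair[OF subgroup_CHB lower_central_subgroup[OF subgroup_H]])

lemma CHB_series_subset: "CHB_series i \<subseteq> CHB" unfolding CHB_series_def by blast
lemma CHB_series_carrier: "x \<in> CHB_series i \<Longrightarrow> x \<in> carrier G" unfolding CHB_series_def using CHB_carrier by blast
lemma CHB_series_0: "CHB_series 0 = CHB" unfolding CHB_series_def using CHB_subset_H by auto

lemma act_CHB_series: "a \<in> carrier A \<Longrightarrow> x \<in> CHB_series i \<Longrightarrow> \<phi> a x \<in> CHB_series i"
  unfolding CHB_series_def using act_CHB act_lower_central by blast

lemma CHB_series_normalized: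
  assumes y: "y \<in> CHB" and x: "x \<in> CHB_series i"
  shows "y \<otimes> x \<otimes> inv y \<in> CHB_series i"
proof -
  have "y \<otimes> x \<otimes> inv y \<in> lower_central G H i"
    using lower_central_normalized[OF subgroup_H] y x CHB_subset_H unfolding CHB_series_def by blast
  moreover have "y \<otimes> x \<otimes> inv y \<in> CHB"
    using y x CHB_series_subset by (blast intro: subgroup.m_closed[OF subgroup_CHB] subgroup.m_inv_closed[OF subgroup_CHB])
  ultimately show ?thesis unfolding CHB_series_def by blast
qed

lemma commutator_mem_CHB_series_Suc:
  assumes x: "x \<in> CHB_series i" and y: "y \<in> CHB"
  shows "commutator x y \<in> CHB_series (Suc i)"
proof -
  have "commutator x y \<in> lower_central G H (Suc i)"
    using commutator_mem_lower_central_Suc x y CHB_subset_H unfolding CHB_series_def by blast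
  moreover have "commutator x y \<in> CHB"
    using x y CHB_series_subset commutator_mem_subgroup[OF subgroup_CHB] by blast
  ultimately show ?thesis unfolding CHB_series_def by blast
qed

lemma CHB_series_Suc_subset: "CHB_series (Suc i) \<subseteq> CHB_series i"
  unfolding CHB_series_def using lower_central_Suc_subset[OF subgroup_H] by blast

lemma CHB_series_down_induct [case_names trivial step]:
  assumes trivial: "\<And>j. CHB_series j = {\<one>} \<Longrightarrow> Q j" and step: "\<And>i. Q (Suc i) \<Longrightarrow> Q i"
  shows "Q i"
proof -
  obtain n where n: "lower_central G H n = {\<one>}"
    using nilpotent_H by (auto simp: nilpotent_subgroup_def)
  have triv: "CHB_series j = {\<one>}" if "n \<le> j" for j
    using lower_central_antimono[OF subgroup_H that] n subgroup.one_closed[OF subgroup_CHB_series, of j]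
    unfolding CHB_series_def by blast
  show ?thesis
  proof (cases "n \<le> i")
    case True
    then show ?thesis using trivial triv by blast
  next
    case False
    then have "i \<le> n" by simp
    then show ?thesis by (induction i rule: inc_induct) (use trivial triv step in auto)
  qed
qed

definition layer :: "nat \<Rightarrow> 'g set monoid" where
  "layer i = G\<lparr>carrier := CHB_series i\<rparr> Mod CHB_series (Suc i)"

definition layer_act :: "'a \<Rightarrow> 'g set \<Rightarrow> 'g set" where "layer_act a X = \<phi> a ` X"

lemma normal_CHB_series_Suc: "CHB_series (Suc i) \<lhd> G\<lparr>carrier := CHB_series i\<rparr>"
proof (rule group.normal_invI[OF subgroup.subgroup_is_group[OF subgroup_CHB_series is_group]])
  show "subgroup (CHB_series (Suc i)) (G\<lparr>carrier := CHB_series i\<rparr>)"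
    by (rule subgroup_incl[OF subgroup_CHB_series subgroup_CHB_series CHB_series_Suc_subset])
  fix x h assume "x \<in> carrier (G\<lparr>carrier := CHB_series i\<rparr>)" "h \<in> CHB_series (Suc i)"
  then show "x \<otimes>\<^bsub>G\<lparr>carrier := CHB_series i\<rparr>\<^esub> h \<otimes>\<^bsub>G\<lparr>carrier := CHB_series i\<rparr>\<^esub>
      inv\<^bsub>G\<lparr>carrier := CHB_series i\<rparr>\<^esub> x \<in> CHB_series (Suc i)"
    using CHB_series_normalized[of x h "Suc i"] m_inv_consistent[OF subgroup_CHB_series] CHB_series_subset
    by auto
qed

lemma group_layer: "group (layer i)"
  unfolding layer_def by (rule normal.factorgroup_is_group[OF normal_CHB_series_Suc])

lemma carrier_layer: "carrier (layer i) = (\<lambda>x. CHB_series (Suc i) #> x) ` CHB_series i"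
  unfolding layer_def carrier_FactGroup by simp

lemma one_layer: "\<one>\<^bsub>layer i\<^esub> = CHB_series (Suc i)"
  unfolding layer_def by simp

lemma rcos_one_CHB_series: "CHB_series i #> \<one> = CHB_series i"
  using CHB_series_carrier by (intro coset_mult_one) auto

lemma mult_layer:
  "x \<in> CHB_series i \<Longrightarrow> y \<in> CHB_series i \<Longrightarrow>
    (CHB_series (Suc i) #> x) \<otimes>\<^bsub>layer i\<^esub> (CHB_series (Suc i) #> y) = CHB_series (Suc i) #> (x \<otimes> y)"
  unfolding layer_def using normal.rcos_sum[OF normal_CHB_series_Suc, of x i y] by simp

lemma rcos_eq_iff_CHB_series:
  "x \<in> carrier G \<Longrightarrow> y \<in> carrier G \<Longrightarrow> CHB_series i #> x = CHB_series i #> y \<longleftrightarrow> x \<otimes> inv y \<in> CHB_series i"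
  by (rule rcos_eq_iff_mult_inv[OF subgroup_CHB_series])

lemma comm_group_layer: "comm_group (layer i)"
proof (rule group.group_comm_groupI[OF group_layer])
  fix X Y assume "X \<in> carrier (layer i)" "Y \<in> carrier (layer i)"
  then obtain x y where xy: "x \<in> CHB_series i" "y \<in> CHB_series i"
    "X = CHB_series (Suc i) #> x" "Y = CHB_series (Suc i) #> y"
    unfolding carrier_layer by blast
  have c: "x \<in> carrier G" "y \<in> carrier G" using xy CHB_series_carrier by auto
  have "x \<otimes> y \<otimes> inv (y \<otimes> x) = commutator (inv x) (inv y)"
    unfolding commutator_def using c by (simp add: inv_mult_group m_assoc)
  also have "\<dots> \<in> CHB_series (Suc i)"
    using xy CHB_series_subset subgroup.m_inv_closed[OF subgroup_CHB_series] subgroup.m_inv_closed[OF subgroup_CHB]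
    by (blast intro: commutator_mem_CHB_series_Suc)
  finally show "X \<otimes>\<^bsub>layer i\<^esub> Y = Y \<otimes>\<^bsub>layer i\<^esub> X"
    using xy c mult_layer rcos_eq_iff_CHB_series by simp
qed

lemma nat_pow_layer:
  "x \<in> CHB_series i \<Longrightarrow> (CHB_series (Suc i) #> x) [^]\<^bsub>layer i\<^esub> (k::nat) = CHB_series (Suc i) #> (x [^] k)"
  unfolding layer_def using normal.FactGroup_pow[OF normal_CHB_series_Suc, of x i k] nat_pow_consistent by simp

lemma exponent_layer: "X \<in> carrier (layer i) \<Longrightarrow> X [^]\<^bsub>layer i\<^esub> order G = \<one>\<^bsub>layer i\<^esub>"
  unfolding carrier_layer
  using nat_pow_layer exponent_order_G CHB_series_carrier rcos_one_CHB_series one_layer by auto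

lemma layer_act_rcos:
  "a \<in> carrier A \<Longrightarrow> x \<in> CHB_series i \<Longrightarrow> layer_act a (CHB_series (Suc i) #> x) = CHB_series (Suc i) #> \<phi> a x"
  unfolding layer_act_def
  using act_rcos[of a "CHB_series (Suc i)" x] CHB_series_carrier act_image_eq[of "CHB_series (Suc i)"]
    act_CHB_series by auto

lemma layer_act_hom: "a \<in> carrier A \<Longrightarrow> layer_act a \<in> hom (layer i) (layer i)"
  unfolding carrier_layer hom_def
  using layer_act_rcos act_CHB_series mult_layer act_mult CHB_series_carrier
    subgroup.m_closed[OF subgroup_CHB_series]
  by (auto simp: carrier_layer)

lemma layer_act_funpow:
  "a \<in> carrier A \<Longrightarrow> x \<in> CHB_series i \<Longrightarrow>
    (layer_act a ^^ k) (CHB_series (Suc i) #> x) = CHB_series (Suc i) #> (\<phi> a ^^ k) x"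
proof (induction k)
  case (Suc k)
  then have "(\<phi> a ^^ k) x \<in> CHB_series i"
    using funpow_closed_on[where f = "\<phi> a"] act_CHB_series by blast
  then show ?case using Suc layer_act_rcos by simp
qed simp

lemma layer_act_period: "a \<in> carrier A \<Longrightarrow> X \<in> carrier (layer i) \<Longrightarrow> (layer_act a ^^ q) X = X"
  unfolding carrier_layer using layer_act_funpow act_period CHB_series_carrier by auto

lemma layer_act_commute:
  assumes "a \<in> carrier A" "c \<in> carrier A" "\<And>y. y \<in> CHB \<Longrightarrow> \<phi> a (\<phi> c y) = \<phi> c (\<phi> a y)"
    and "X \<in> carrier (layer i)"
  shows "layer_act a (layer_act c X) = layer_act c (layer_act a X)"
proof -
  obtain x where x: "x \<in> CHB_series i" "X = CHB_series (Suc i) #> x"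
    using assms(4) unfolding carrier_layer by blast
  then have "x \<in> CHB" using CHB_series_subset by blast
  then show ?thesis using x assms(1-3) by (simp add: layer_act_rcos act_CHB_series)
qed

text \<open>The norm of the coset of \<open>w\<inverse> f(w)\<close> telescopes to \<open>w\<inverse> f\<^sup>q(w) = \<one>\<close>.\<close>

lemma endo_norm_layer_trivial:
  assumes f: "f \<in> carrier A" and w: "w \<in> CHB" and mem: "inv w \<otimes> \<phi> f w \<in> CHB_series i"
  shows "endo_norm (layer i) q (layer_act f) (CHB_series (Suc i) #> (inv w \<otimes> \<phi> f w)) = \<one>\<^bsub>layer i\<^esub>"
proof -
  let ?N = "CHB_series (Suc i)"
  interpret L: comm_group "layer i" by (rule comm_group_layer)
  define m where "m = inv w \<otimes> \<phi> f w"
  define R where "R k = inv w \<otimes> (\<phi> f ^^ k) w" for k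
  define F where "F t = (layer_act f ^^ t) (?N #> m)" for t
  have wc: "w \<in> carrier G" using w CHB_carrier by blast
  have R_Suc: "R (Suc k) = m \<otimes> \<phi> f (R k)" for k
    unfolding R_def m_def by (rule inv_mult_funpow_Suc[OF act_hom[OF f] wc])
  have R_mem: "R k \<in> CHB_series i" for k
  proof (induction k)
    case 0
    then show ?case unfolding R_def using wc subgroup.one_closed[OF subgroup_CHB_series] by simp
  next
    case (Suc k)
    then show ?case
      unfolding R_Suc using mem act_CHB_series[OF f] subgroup.m_closed[OF subgroup_CHB_series]
      by (simp add: m_def)
  qed
  have Mc: "?N #> m \<in> carrier (layer i)" unfolding carrier_layer m_def using mem by blast
  have Fc: "F t \<in> carrier (layer i)" for t
    unfolding F_def using Mc layer_act_hom[OF f] by (simp add: funpow_hom_in_carrier)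
  have telescope: "?N #> R k = (\<Otimes>\<^bsub>layer i\<^esub>t\<in>{..<k}. F t)" for k
  proof (induction k)
    case 0
    then show ?case unfolding R_def using wc rcos_one_CHB_series by (simp add: one_layer)
  next
    case (Suc k)
    have "?N #> R (Suc k) = (?N #> m) \<otimes>\<^bsub>layer i\<^esub> layer_act f (?N #> R k)"
      unfolding R_Suc using mult_layer mem R_mem act_CHB_series[OF f] layer_act_rcos[OF f]
      by (simp add: m_def)
    also have "\<dots> = (?N #> m) \<otimes>\<^bsub>layer i\<^esub> (\<Otimes>\<^bsub>layer i\<^esub>t\<in>{..<k}. F (Suc t))"
      unfolding Suc F_def using Fc by (simp add: L.hom_finprod[OF layer_act_hom[OF f]] F_def)
    also have "\<dots> = (\<Otimes>\<^bsub>layer i\<^esub>t\<in>{..<Suc k}. F t)"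
      using L.finprod_lessThan_Suc_shift[of F k, OF Fc] by (simp add: F_def)
    finally show ?case .
  qed
  have "R q = \<one>" unfolding R_def using act_period[OF f wc] wc by simp
  then show ?thesis
    using telescope[of q] rcos_one_CHB_series by (simp add: endo_norm_def F_def m_def one_layer)
qed

lemma exists_layer_coboundary:
  assumes f: "f \<in> carrier A" and w: "w \<in> CHB" and mem: "inv w \<otimes> \<phi> f w \<in> CHB_series i"
  shows "\<exists>z \<in> CHB_series i. inv (w \<otimes> z) \<otimes> \<phi> f (w \<otimes> z) \<in> CHB_series (Suc i)"
proof -
  let ?N = "CHB_series (Suc i)"
  interpret L: comm_group "layer i" by (rule comm_group_layer)
  define m where "m = inv w \<otimes> \<phi> f w"
  have Mc: "?N #> m \<in> carrier (layer i)" unfolding carrier_layer m_def using mem by blast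
  obtain Z where Z: "Z \<in> carrier (layer i)" "(?N #> m) \<otimes>\<^bsub>layer i\<^esub> layer_act f Z = Z"
    using L.endo_norm_one_imp_coboundary[OF layer_act_hom[OF f] exponent_layer coprime_order Mc]
      endo_norm_layer_trivial[OF f w mem] unfolding m_def by blast
  obtain z where z: "z \<in> CHB_series i" "Z = ?N #> z" using Z(1) unfolding carrier_layer by blast
  have c: "w \<in> carrier G" "z \<in> carrier G" "\<phi> f w \<in> carrier G" "\<phi> f z \<in> carrier G"
    using w z f CHB_carrier CHB_series_carrier by auto
  have "?N #> (m \<otimes> \<phi> f z) = ?N #> z"
    using Z(2) z mem act_CHB_series[OF f z(1)] by (simp add: layer_act_rcos[OF f] mult_layer m_def)
  then have "(m \<otimes> \<phi> f z) \<otimes> inv z \<in> ?N"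
    using c by (simp add: rcos_eq_iff_CHB_series m_def)
  then have "inv z \<otimes> ((m \<otimes> \<phi> f z) \<otimes> inv z) \<otimes> inv (inv z) \<in> ?N"
    using z(1) CHB_series_subset subgroup.m_inv_closed[OF subgroup_CHB] CHB_series_normalized by blast
  moreover have "inv (w \<otimes> z) \<otimes> \<phi> f (w \<otimes> z) = inv z \<otimes> ((m \<otimes> \<phi> f z) \<otimes> inv z) \<otimes> inv (inv z)"
    unfolding m_def using f c by (simp add: act_mult inv_mult_group m_assoc)
  ultimately have "inv (w \<otimes> z) \<otimes> \<phi> f (w \<otimes> z) \<in> ?N" by simp
  with z(1) show ?thesis by blast
qed

text \<open>Fixed points lift through the layers, by the coprime Hilbert 90 in each layer.\<close>

lemma lift_fixed_point:
  assumes "f \<in> carrier A" "w \<in> CHB" "inv w \<otimes> \<phi> f w \<in> CHB_series i"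
  shows "\<exists>y \<in> CHB. inv w \<otimes> y \<in> CHB_series i \<and> \<phi> f y = y"
  using assms(2,3)
proof (induction i arbitrary: w rule: CHB_series_down_induct)
  case (trivial j)
  have wc: "w \<in> carrier G" using trivial.prems CHB_carrier by blast
  have "\<phi> f w = w \<otimes> (inv w \<otimes> \<phi> f w)" using assms(1) wc by simp
  also have "inv w \<otimes> \<phi> f w = \<one>" using trivial by blast
  finally have "\<phi> f w = w" using wc by simp
  then show ?case
    using trivial subgroup.one_closed[OF subgroup_CHB_series] CHB_carrier by auto
next
  case (step i)
  obtain z where z: "z \<in> CHB_series i" "inv (w \<otimes> z) \<otimes> \<phi> f (w \<otimes> z) \<in> CHB_series (Suc i)"
    using exists_layer_coboundary[OF assms(1) step.prems] by blast
  have wz: "w \<otimes> z \<in> CHB"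
    using step.prems z CHB_series_subset subgroup.m_closed[OF subgroup_CHB] by blast
  obtain y where y: "y \<in> CHB" "inv (w \<otimes> z) \<otimes> y \<in> CHB_series (Suc i)" "\<phi> f y = y"
    using step.IH[OF wz z(2)] by blast
  have "inv w \<otimes> y = z \<otimes> (inv (w \<otimes> z) \<otimes> y)"
    using step.prems z y CHB_carrier CHB_series_carrier by (simp add: inv_mult_group m_assoc)
  also have "\<dots> \<in> CHB_series i"
    using z y CHB_series_Suc_subset subgroup.m_closed[OF subgroup_CHB_series] by blast
  finally show ?case using y by blast
qed

definition CHB_gen :: "'g set" where
  "CHB_gen = generate G (\<Union>f \<in> carrier A - B. fixed_points \<phi> CHB {f})"

lemma subgroup_CHB_gen: "subgroup CHB_gen G"
  unfolding CHB_gen_def using CHB_carrier by (intro generate_is_subgroup) (auto simp: fixed_points_def)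

lemma fixed_layer_coset_lifts:
  assumes f: "f \<in> carrier A" "f \<notin> B" and w: "w \<in> CHB_series i"
    and fixed: "CHB_series (Suc i) #> \<phi> f w = CHB_series (Suc i) #> w"
  shows "\<exists>y \<in> CHB_series i \<inter> CHB_gen. CHB_series (Suc i) #> w = CHB_series (Suc i) #> y"
proof -
  let ?N = "CHB_series (Suc i)"
  have wc: "w \<in> carrier G" and wK: "w \<in> CHB" using w CHB_series_carrier CHB_series_subset by auto
  have fwc: "\<phi> f w \<in> carrier G" using f wc by simp
  have iwK: "inv w \<in> CHB" using wK subgroup.m_inv_closed[OF subgroup_CHB] by blast
  have "\<phi> f w \<otimes> inv w \<in> ?N" using fixed wc fwc by (simp add: rcos_eq_iff_CHB_series)
  then have "inv w \<otimes> (\<phi> f w \<otimes> inv w) \<otimes> inv (inv w) \<in> ?N" by (rule CHB_series_normalized[OF iwK])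
  then have "inv w \<otimes> \<phi> f w \<in> ?N" using wc fwc by (simp add: m_assoc)
  then obtain y where y: "y \<in> CHB" "inv w \<otimes> y \<in> ?N" "\<phi> f y = y"
    using lift_fixed_point[OF f(1) wK] by blast
  have yc: "y \<in> carrier G" using y CHB_carrier by blast
  have "y = w \<otimes> (inv w \<otimes> y)" using wc yc by simp
  also have "\<dots> \<in> CHB_series i"
    using w y(2) CHB_series_Suc_subset subgroup.m_closed[OF subgroup_CHB_series] by blast
  finally have y_series: "y \<in> CHB_series i" .
  have "y \<in> CHB_gen" unfolding CHB_gen_def using f y by (auto simp: fixed_points_def intro: generate.incl)
  moreover have "w \<otimes> (inv w \<otimes> y) \<otimes> inv w \<in> ?N" by (rule CHB_series_normalized[OF wK y(2)])
  then have "?N #> y = ?N #> w" using wc yc by (simp add: rcos_eq_iff_CHB_series m_assoc)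
  ultimately show ?thesis using y_series by auto
qed

lemma subgroup_layer_image_CHB_gen:
  "subgroup ((\<lambda>y. CHB_series (Suc i) #> y) ` (CHB_series i \<inter> CHB_gen)) (layer i)"
proof -
  interpret N: normal "CHB_series (Suc i)" "G\<lparr>carrier := CHB_series i\<rparr>" by (rule normal_CHB_series_Suc)
  have "(\<lambda>y. CHB_series (Suc i) #> y) = (\<lambda>y. CHB_series (Suc i) #>\<^bsub>G\<lparr>carrier := CHB_series i\<rparr>\<^esub> y)"
    by (auto simp: r_coset_def)
  then interpret \<pi>: group_hom "G\<lparr>carrier := CHB_series i\<rparr>" "layer i" "\<lambda>y. CHB_series (Suc i) #> y"
    unfolding layer_def group_hom_def group_hom_axioms_def
    using N.r_coset_hom_Mod N.factorgroup_is_group subgroup.subgroup_is_group[OF subgroup_CHB_series is_group]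
    by simp
  have "subgroup (CHB_series i \<inter> CHB_gen) (G\<lparr>carrier := CHB_series i\<rparr>)"
    by (rule subgroup_incl[OF subgroups_Inter_pair[OF subgroup_CHB_series subgroup_CHB_gen] subgroup_CHB_series])
      blast
  then show ?thesis by (rule \<pi>.subgroup_img_is_subgroup)
qed

lemma carrier_layer_subset_image_CHB_gen:
  assumes a: "a \<in> carrier A" and c: "c \<in> carrier A" "c \<notin> B"
    and ac: "\<And>j. j < q \<Longrightarrow> a \<otimes>\<^bsub>A\<^esub> c [^]\<^bsub>A\<^esub> j \<notin> B"
    and comm: "\<And>y. y \<in> CHB \<Longrightarrow> \<phi> a (\<phi> c y) = \<phi> c (\<phi> a y)"
  shows "carrier (layer i) \<subseteq> (\<lambda>y. CHB_series (Suc i) #> y) ` (CHB_series i \<inter> CHB_gen)"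
proof
  let ?N = "CHB_series (Suc i)"
  let ?W = "(\<lambda>y. ?N #> y) ` (CHB_series i \<inter> CHB_gen)"
  interpret L: comm_group "layer i" by (rule comm_group_layer)
  have lift: "?N #> w \<in> ?W" if "f \<in> carrier A" "f \<notin> B" "w \<in> CHB_series i" "?N #> \<phi> f w = ?N #> w" for f w
    using fixed_layer_coset_lifts[OF that] by auto
  fix X assume X: "X \<in> carrier (layer i)"
  show "X \<in> ?W"
  proof (rule L.mem_subgroup_containing_fixed_points[OF Acube.prime_q layer_act_hom[OF a] layer_act_hom[OF c(1)]
        _ _ _ subgroup_layer_image_CHB_gen exponent_layer coprime_order _ _ X])
    show "layer_act a (layer_act c Y) = layer_act c (layer_act a Y)" if "Y \<in> carrier (layer i)" for Y
      by (rule layer_act_commute[OF a c(1) comm that])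
    show "(layer_act a ^^ q) Y = Y" "(layer_act c ^^ q) Y = Y" if "Y \<in> carrier (layer i)" for Y
      using layer_act_period a c that by auto
    show "Y \<in> ?W" if j: "j < q" and Y: "Y \<in> carrier (layer i)"
      and fixed: "layer_act a ((layer_act c ^^ j) Y) = Y" for j Y
    proof -
      obtain w where w: "w \<in> CHB_series i" "Y = ?N #> w" using Y unfolding carrier_layer by blast
      have "(\<phi> c ^^ j) w \<in> CHB_series i"
        using w funpow_closed_on[where f = "\<phi> c"] act_CHB_series[OF c(1)] by blast
      then have "?N #> \<phi> (a \<otimes>\<^bsub>A\<^esub> c [^]\<^bsub>A\<^esub> j) w = ?N #> w"
        using fixed w a c CHB_series_carrier
        by (simp add: layer_act_funpow layer_act_rcos act_comp act_funpow)
      then show ?thesis using lift[of "a \<otimes>\<^bsub>A\<^esub> c [^]\<^bsub>A\<^esub> j" w] a c ac[OF j] w by simp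
    qed
    show "Y \<in> ?W" if Y: "Y \<in> carrier (layer i)" and fixed: "layer_act c Y = Y" for Y
    proof -
      obtain w where w: "w \<in> CHB_series i" "Y = ?N #> w" using Y unfolding carrier_layer by blast
      then show ?thesis using lift[OF c w(1)] fixed layer_act_rcos[OF c(1) w(1)] by simp
    qed
  qed
qed

lemma CHB_series_subset_CHB_gen_step:
  assumes "a \<in> carrier A" "c \<in> carrier A" "c \<notin> B"
    and "\<And>j. j < q \<Longrightarrow> a \<otimes>\<^bsub>A\<^esub> c [^]\<^bsub>A\<^esub> j \<notin> B"
    and "\<And>y. y \<in> CHB \<Longrightarrow> \<phi> a (\<phi> c y) = \<phi> c (\<phi> a y)"
    and IH: "CHB_series (Suc i) \<subseteq> CHB_gen"
  shows "CHB_series i \<subseteq> CHB_gen"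
proof
  fix x assume x: "x \<in> CHB_series i"
  then obtain y where y: "y \<in> CHB_series i" "y \<in> CHB_gen" "CHB_series (Suc i) #> x = CHB_series (Suc i) #> y"
    using carrier_layer_subset_image_CHB_gen[OF assms(1-5), of i] unfolding carrier_layer by blast
  have c: "x \<in> carrier G" "y \<in> carrier G" using x y CHB_series_carrier by auto
  have "x \<otimes> inv y \<in> CHB_gen" using y(3) c IH by (auto simp: rcos_eq_iff_CHB_series)
  then have "x \<otimes> inv y \<otimes> y \<in> CHB_gen" using y(2) subgroup.m_closed[OF subgroup_CHB_gen] by blast
  then show "x \<in> CHB_gen" using c by (simp add: m_assoc)
qed

lemma CHB_subset_CHB_gen:
  assumes "a \<in> carrier A" "c \<in> carrier A" "c \<notin> B"
    and "\<And>j. j < q \<Longrightarrow> a \<otimes>\<^bsub>A\<^esub> c [^]\<^bsub>A\<^esub> j \<notin> B"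
    and "\<And>y. y \<in> CHB \<Longrightarrow> \<phi> a (\<phi> c y) = \<phi> c (\<phi> a y)"
  shows "CHB \<subseteq> CHB_gen"
proof -
  have "CHB_series i \<subseteq> CHB_gen" for i
  proof (induction i rule: CHB_series_down_induct)
    case (trivial j)
    then show ?case using subgroup.one_closed[OF subgroup_CHB_gen] by simp
  next
    case (step i)
    then show ?case using CHB_series_subset_CHB_gen_step[OF assms(1-5)] by blast
  qed
  then show ?thesis using CHB_series_0 by metis
qed

lemma CHB_gen_subset_commutator_preimage:
  "CHB_gen \<subseteq> {k \<in> carrier G. \<forall>x \<in> P. commutator x k \<in> fixed_commutators}"
proof -
  obtain b where b: "b \<in> B" "b \<noteq> \<one>\<^bsub>A\<^esub>" using Acube.exists_nontrivial_B by blast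
  have bc: "b \<in> carrier A" using b Acube.B_carrier by blast
  have "k \<in> {k \<in> carrier G. \<forall>x \<in> P. commutator x k \<in> fixed_commutators}"
    if f: "f \<in> carrier A" "f \<notin> B" and k: "k \<in> CHB" "\<phi> f k = k" for f k
  proof -
    have "f \<otimes>\<^bsub>A\<^esub> b [^]\<^bsub>A\<^esub> j \<noteq> \<one>\<^bsub>A\<^esub>" for j :: nat
    proof
      assume "f \<otimes>\<^bsub>A\<^esub> b [^]\<^bsub>A\<^esub> j = \<one>\<^bsub>A\<^esub>"
      then have "f = inv\<^bsub>A\<^esub> (b [^]\<^bsub>A\<^esub> j)" using f(1) bc A.inv_equality[symmetric] by simp
      then show False using f(2) Acube.B_inv[OF Acube.B_pow[OF b(1)]] by simp
    qed
    moreover have "f \<otimes>\<^bsub>A\<^esub> b = b \<otimes>\<^bsub>A\<^esub> f" using Acube.B_central[OF b(1) f(1)] by simp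
    moreover have "k \<in> H" "\<phi> b k = k" using k(1) CHB_subset_H CHB_fixed[OF k(1) b(1)] by auto
    ultimately show ?thesis
      using commutator_mem_fixed_commutators_of_pair[OF f(1) bc _ b(2) _ _ k(2)] k(1) CHB_carrier by blast
  qed
  then show ?thesis unfolding CHB_gen_def
    by (intro generate_subgroup_incl[OF _ subgroup_commutator_preimage[OF normal_P subgroup_fixed_commutators]])
      (auto simp: fixed_points_def)
qed

lemma comm_subgroup_subset_fixed_commutators: "comm_subgroup G P CHB \<subseteq> fixed_commutators"
proof -
  obtain a c \<beta> where ac: "a \<in> carrier A" "c \<in> carrier A" "c \<notin> B"
    "\<And>j. j < q \<Longrightarrow> a \<otimes>\<^bsub>A\<^esub> c [^]\<^bsub>A\<^esub> j \<notin> B" and \<beta>: "\<beta> \<in> B" "c \<otimes>\<^bsub>A\<^esub> a = a \<otimes>\<^bsub>A\<^esub> c \<otimes>\<^bsub>A\<^esub> \<beta>"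
    using Acube.exists_commuting_pair_mod_B by blast
  have comm: "\<phi> a (\<phi> c y) = \<phi> c (\<phi> a y)" if y: "y \<in> CHB" for y
  proof -
    have yc: "y \<in> carrier G" and \<beta>c: "\<beta> \<in> carrier A" using y \<beta>(1) CHB_carrier Acube.B_carrier by auto
    have "\<phi> c (\<phi> a y) = \<phi> (a \<otimes>\<^bsub>A\<^esub> c \<otimes>\<^bsub>A\<^esub> \<beta>) y"
      using act_comp[of c a y] ac yc by (simp only: \<beta>(2))
    also have "\<dots> = \<phi> (a \<otimes>\<^bsub>A\<^esub> c) (\<phi> \<beta> y)"
      using act_comp[of "a \<otimes>\<^bsub>A\<^esub> c" \<beta> y] ac yc \<beta>c by simp
    also have "\<dots> = \<phi> a (\<phi> c y)" using act_comp[of a c y] ac yc CHB_fixed[OF y \<beta>(1)] by simp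
    finally show ?thesis by simp
  qed
  have "CHB \<subseteq> CHB_gen" by (rule CHB_subset_CHB_gen[OF ac comm])
  then have "(\<lambda>(x, k). commutator x k) ` (P \<times> CHB) \<subseteq> fixed_commutators"
    using CHB_gen_subset_commutator_preimage by force
  then show ?thesis unfolding comm_subgroup_eq
    by (rule generate_subgroup_incl[OF _ subgroup_fixed_commutators])
qed

end

theorem lemma2p4:
  fixes A :: "('a, 'c) monoid_scheme" and G :: "('g, 'd) monoid_scheme"
    and \<phi> :: "'a \<Rightarrow> 'g \<Rightarrow> 'g"
    and q p :: nat and B :: "'a set" and P H :: "'g set"
  assumes "prime q"
    and "group A"
    and "order A = q ^ 3"
    and "\<forall>a \<in> carrier A. a [^]\<^bsub>A\<^esub> q = \<one>\<^bsub>A\<^esub>"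
    and "subgroup B A" and "B \<subseteq> group_center A" and "card B = q"
    and "group G" and "finite (carrier G)"
    and "group_action A (carrier G) \<phi>"
    and "\<forall>a \<in> carrier A. \<phi> a \<in> iso G G"
    and "coprime (order G) q"
    and "subgroup P G" and "subgroup H G"
    and "\<forall>a \<in> carrier A. \<phi> a ` P = P"
    and "\<forall>a \<in> carrier A. \<phi> a ` H = H"
    and "P <#>\<^bsub>G\<^esub> H = carrier G"
    and "prime p"
    and "P \<lhd> G" and "\<exists>k. card P = p ^ k"
    and "nilpotent_subgroup G H" and "coprime (card H) p"
    and "\<forall>x \<in> P. \<forall>y \<in> P. x \<otimes>\<^bsub>G\<^esub> y = y \<otimes>\<^bsub>G\<^esub> x"
  shows "comm_subgroup G P (fixed_points \<phi> H B)
           \<subseteq> generate G (\<Union>a \<in> carrier A - {\<one>\<^bsub>A\<^esub>}.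
                 comm_subgroup G (fixed_points \<phi> P {a}) (fixed_points \<phi> H {a}))"
proof -
  interpret coprime_action_setting G A \<phi> q B P H
    unfolding coprime_action_setting_def coprime_action_setting_axioms_def automorphic_action_def
      automorphic_action_axioms_def cube_group_def cube_group_axioms_def
    using assms by (simp add: iso_def)
  show ?thesis
    using comm_subgroup_subset_fixed_commutators unfolding CHB_def fixed_commutators_def .
qed

end
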